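(* Under the standing assumptions below, let $\Gamma$ be a family of compact rectifiable curves in $X$. Then $\Gamma$ has zero $p$-modulus with respect to $(X,d,\mu)$ if and only if $\Gamma$ has zero $p$-modulus with respect to $(\widehat X,\hat d,\hat\mu_q)$.
   Context: Standing assumptions: $1\le p<\infty$; $(X,d)$ is a complete unbounded metric space with a positive complete Borel measure $\mu$ with $0<\mu(B)<\infty$ for every ball; $\mu$ is doubling and supports a $p$-Poincaré inequality; for a base point $a$ with $|x|=d(x,a)$ there are $s,C_s>0$ with $\mu(B(a,r))/\mu(B(a,R))\ge C_s(r/R)^s$ for $1\le r\le R<\infty$; $X$ is annularly connected for large radii around $a$ (there are $A,R_A\ge1$ such that points $x,y$ with $|x|=|y|\ge R_A$ can be joined by a curve in $B(a,A|x|)\setminus\overline{B(a,|x|/A)}$); and $q>s$. Sphericalization: $\widehat X=X\cup\{\infty\}$, $d_a(x,y)=\frac{d(x,y)}{(1+|x|)(1+|y|)}$ for $x,y\in X$, $d_a(x,\infty)=d_a(\infty,x)=\frac1{1+|x|}$, $d_a(\infty,\infty)=0$, $\hat d(x,y)=\inf\sum_{j=1}^kd_a(x_{j-1},x_j)$ over finite chains in $\widehat X$; $d\hat\mu_q=d\mu/(1+|x|)^q$ on $X$, $\hat\mu_q(\{\infty\})=0$. A family $\Gamma$ of rectifiable curves has zero $p$-modulus in a metric measure space $(Y,\rho,\nu)$ if there is a Borel $g\in L^p(Y,\nu)$, $g\ge0$, with $\int_\gamma g\,ds=\infty$ for every $\gamma\in\Gamma$ ($ds$ the arc length with respect to $\rho$).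 *)

theory Defs
  imports "HOL-Analysis.Analysis"
begin

text \<open>Curves are triples (a, b, gamma) with gamma defined on the compact interval [a,b].\<close>

type_synonym 'a curve = "real \<times> real \<times> (real \<Rightarrow> 'a)"

definition borel_of :: "'a topology \<Rightarrow> 'a measure" where
  "borel_of T = sigma (topspace T) {U. openin T U}"

definition ennpow :: "ennreal \<Rightarrow> real \<Rightarrow> ennreal" where
  "ennpow x e = (if x = \<infinity> then \<infinity> else ennreal (enn2real x powr e))"

definition compact_curve :: "'a set \<Rightarrow> ('a \<Rightarrow> 'a \<Rightarrow> real) \<Rightarrow> 'a curve \<Rightarrow> bool" where
  "compact_curve S \<rho> c = (case c of (a, b, \<gamma>) \<Rightarrow>
      a \<le> b \<and> continuous_map (top_of_set {a..b}) (Metric_space.mtopology S \<rho>) \<gamma>)"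

definition curve_length :: "('a \<Rightarrow> 'a \<Rightarrow> real) \<Rightarrow> (real \<Rightarrow> 'a) \<Rightarrow> real \<Rightarrow> real \<Rightarrow> ennreal" where
  "curve_length \<rho> \<gamma> a b =
     (SUP ts \<in> {ts. ts \<noteq> [] \<and> hd ts = a \<and> last ts = b \<and> sorted ts}.
        ennreal (sum_list (map (\<lambda>(s, t). \<rho> (\<gamma> s) (\<gamma> t)) (zip ts (tl ts)))))"

definition rectifiable_curve :: "'a set \<Rightarrow> ('a \<Rightarrow> 'a \<Rightarrow> real) \<Rightarrow> 'a curve \<Rightarrow> bool" where
  "rectifiable_curve S \<rho> c = (compact_curve S \<rho> c \<and>
      (case c of (a, b, \<gamma>) \<Rightarrow> curve_length \<rho> \<gamma> a b < \<infinity>))"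

text \<open>Line integral with respect to arc length: integral over [0, length] of g composed with
  the arc length parametrization gamma_s, where gamma = gamma_s o s_gamma and
  s_gamma(t) = length of gamma on [a,t].\<close>
definition line_integral :: "('a \<Rightarrow> 'a \<Rightarrow> real) \<Rightarrow> 'a curve \<Rightarrow> ('a \<Rightarrow> ennreal) \<Rightarrow> ennreal" where
  "line_integral \<rho> c g = (case c of (a, b, \<gamma>) \<Rightarrow>
     (let sl = (\<lambda>t. enn2real (curve_length \<rho> \<gamma> a t));
          len = enn2real (curve_length \<rho> \<gamma> a b)
      in \<integral>\<^sup>+ t. g (\<gamma> (SOME u. a \<le> u \<and> u \<le> b \<and> sl u = t)) * indicator {0..len} t \<partial>lborel))"

definition zero_p_modulus :: "'a set \<Rightarrow> ('a \<Rightarrow> 'a \<Rightarrow> real) \<Rightarrow> 'a measure \<Rightarrow> real \<Rightarrow> 'a curve set \<Rightarrow> bool" where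
  "zero_p_modulus S \<rho> \<nu> p \<Gamma> = (\<exists>g :: 'a \<Rightarrow> ennreal.
      g \<in> borel_measurable (borel_of (Metric_space.mtopology S \<rho>)) \<and>
      (\<integral>\<^sup>+ x. ennpow (g x) p \<partial>\<nu>) < \<infinity> \<and>
      (\<forall>c\<in>\<Gamma>. line_integral \<rho> c g = \<infinity>))"

definition complete_measure_cond :: "'a measure \<Rightarrow> bool" where
  "complete_measure_cond \<mu> = (\<forall>A N. N \<in> null_sets \<mu> \<and> A \<subseteq> N \<longrightarrow> A \<in> sets \<mu>)"

definition doubling :: "'a::metric_space measure \<Rightarrow> bool" where
  "doubling \<mu> = (\<exists>C. \<forall>x r. r > 0 \<longrightarrow> emeasure \<mu> (ball x (2 * r)) \<le> ennreal C * emeasure \<mu> (ball x r))"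

definition upper_gradient :: "('a::metric_space \<Rightarrow> real) \<Rightarrow> ('a \<Rightarrow> ennreal) \<Rightarrow> bool" where
  "upper_gradient u g = (\<forall>c. rectifiable_curve UNIV dist c \<longrightarrow>
      (case c of (a, b, \<gamma>) \<Rightarrow> ennreal \<bar>u (\<gamma> a) - u (\<gamma> b)\<bar> \<le> line_integral dist c g))"

definition p_poincare :: "'a::metric_space measure \<Rightarrow> real \<Rightarrow> bool" where
  "p_poincare \<mu> p = (\<exists>C > 0. \<exists>lam \<ge> 1. \<forall>u g x r.
      r > 0 \<and> u \<in> borel_measurable \<mu> \<and> (\<forall>y \<rho>. set_integrable \<mu> (ball y \<rho>) u) \<and>
      g \<in> borel_measurable borel \<and> upper_gradient u g \<longrightarrow>
      (let uB = (\<integral>y\<in>ball x r. u y \<partial>\<mu>) / measure \<mu> (ball x r) in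
        ennreal ((\<integral>y\<in>ball x r. \<bar>u y - uB\<bar> \<partial>\<mu>) / measure \<mu> (ball x r))
        \<le> ennreal (C * r) * ennpow (ennreal (1 / measure \<mu> (ball x (lam * r))) *
               (\<integral>\<^sup>+ y\<in>ball x (lam * r). ennpow (g y) p \<partial>\<mu>)) (1 / p)))"

definition annularly_connected :: "'a::metric_space \<Rightarrow> bool" where
  "annularly_connected a = (\<exists>A RA. A \<ge> 1 \<and> RA \<ge> 1 \<and> (\<forall>x y.
      dist x a = dist y a \<and> dist x a \<ge> RA \<longrightarrow>
      (\<exists>t0 t1 \<gamma>. compact_curve UNIV dist (t0, t1, \<gamma>) \<and> \<gamma> t0 = x \<and> \<gamma> t1 = y \<and>
         \<gamma> ` {t0..t1} \<subseteq> ball a (A * dist x a) - closure (ball a (dist x a / A)))))"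

definition sph_da :: "'a::metric_space \<Rightarrow> 'a option \<Rightarrow> 'a option \<Rightarrow> real" where
  "sph_da a x y = (case (x, y) of
      (Some x', Some y') \<Rightarrow> dist x' y' / ((1 + dist x' a) * (1 + dist y' a))
    | (Some x', None) \<Rightarrow> 1 / (1 + dist x' a)
    | (None, Some y') \<Rightarrow> 1 / (1 + dist y' a)
    | (None, None) \<Rightarrow> 0)"

definition sph_dist :: "'a::metric_space \<Rightarrow> 'a option \<Rightarrow> 'a option \<Rightarrow> real" where
  "sph_dist a x y = (INF xs \<in> {xs. 2 \<le> length xs \<and> hd xs = x \<and> last xs = y}.
      sum_list (map (\<lambda>(u, v). sph_da a u v) (zip xs (tl xs))))"

definition sph_measure :: "'a::metric_space measure \<Rightarrow> 'a \<Rightarrow> real \<Rightarrow> 'a option measure" where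
  "sph_measure \<mu> a q = density (distr \<mu> (sigma UNIV {A. Some -` A \<in> sets \<mu>}) Some)
      (\<lambda>y. case y of None \<Rightarrow> 0 | Some x \<Rightarrow> ennreal (1 / (1 + dist x a) powr q))"

end

theory Submission
  imports Defs "HOL-Probability.Distribution_Functions"
begin

(* Zero modulus is witnessed by a single Borel function g, and the weight w x = (1 + |x|) powr (q / p)
   transports such functions both ways: the integral of g^p against mu equals that of (g w)^p
   against mu_q. What remains is that a line integral along a compact curve is infinite for d iff
   it is infinite for the sphericalized metric. The curve lies in a ball B(a, R), on which
   d / (2R + 2)^2 <= d_hat <= d and w is bounded above and below. Comparing the two line integrals
   reduces, via the arc length parametrizations, to a change of variables inequality for a
   monotone Lipschitz map of the real line, which follows from comparing push-forward measures on
   half-open intervals. *)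

section \<open>Chain sums and curve length\<close>

definition chain_sum :: "('b \<Rightarrow> 'b \<Rightarrow> real) \<Rightarrow> 'b list \<Rightarrow> real" where
  "chain_sum f xs = sum_list (map (\<lambda>(u, v). f u v) (zip xs (tl xs)))"

definition partitions :: "real \<Rightarrow> real \<Rightarrow> real list set" where
  "partitions u v = {ts. ts \<noteq> [] \<and> hd ts = u \<and> last ts = v \<and> sorted ts}"

lemma chain_sum_Nil [simp]: "chain_sum f [] = 0"
  by (simp add: chain_sum_def)

lemma chain_sum_singleton [simp]: "chain_sum f [x] = 0"
  by (simp add: chain_sum_def)

lemma chain_sum_Cons_Cons [simp]: "chain_sum f (x # y # ys) = f x y + chain_sum f (y # ys)"
  by (simp add: chain_sum_def)

lemma chain_sum_append: "chain_sum f (xs @ y # ys) = chain_sum f (xs @ [y]) + chain_sum f (y # ys)"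
proof (induction xs)
  case (Cons x xs)
  then show ?case by (cases xs) auto
qed simp

lemma chain_sum_append_tl:
  assumes "xs \<noteq> []" "ys \<noteq> []" "last xs = hd ys"
  shows "chain_sum f (xs @ tl ys) = chain_sum f xs + chain_sum f ys"
proof -
  have xs: "xs = butlast xs @ [hd ys]" and ys: "ys = hd ys # tl ys"
    using assms append_butlast_last_id[of xs] by simp_all
  have "chain_sum f (xs @ tl ys) = chain_sum f (butlast xs @ hd ys # tl ys)"
    by (subst xs) simp
  then show ?thesis
    using chain_sum_append[of f "butlast xs" "hd ys" "tl ys"] xs ys by metis
qed

lemma chain_sum_nonneg: "(\<And>u v. 0 \<le> f u v) \<Longrightarrow> 0 \<le> chain_sum f xs"
  unfolding chain_sum_def by (induction xs) (auto intro!: sum_list_nonneg)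

lemma chain_sum_scaled_mono:
  assumes "set xs \<subseteq> S" and "\<And>s t. s \<in> S \<Longrightarrow> t \<in> S \<Longrightarrow> c * f s t \<le> g s t"
  shows "c * chain_sum f xs \<le> chain_sum g xs"
  using assms(1)
proof (induction xs rule: induct_list012)
  case (3 x y zs)
  then show ?case using assms(2)[of x y] by (simp add: distrib_left add_mono)
qed auto

lemma chain_sum_rev:
  assumes "\<And>u v. f u v = f v u"
  shows "chain_sum f (rev xs) = chain_sum f xs"
proof (induction xs rule: induct_list012)
  case (3 x y zs)
  have "chain_sum f (rev (x # y # zs)) = chain_sum f (rev zs @ [y]) + chain_sum f [y, x]"
    using chain_sum_append[of f "rev zs" y "[x]"] by simp
  then show ?case using 3 assms[of x y] by simp
qed auto

lemma chain_sum_insert: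
  assumes nonneg: "\<And>u v. 0 \<le> f u v" and triangle: "\<And>u v w. f u w \<le> f u v + f v w"
  shows "chain_sum f (xs @ ys) \<le> chain_sum f (xs @ t # ys)"
proof (cases xs rule: rev_exhaust)
  case Nil
  then show ?thesis using nonneg by (cases ys) auto
next
  case (snoc xs' x)
  then show ?thesis
  proof (cases ys)
    case Nil
    then show ?thesis using snoc chain_sum_append[of f xs' x "[t]"] nonneg[of x t] by simp
  next
    case (Cons y ys')
    then show ?thesis
      using chain_sum_append[of f xs' x "y # ys'"] chain_sum_append[of f xs' x "t # y # ys'"]
        triangle[of x y t] unfolding snoc by simp
  qed
qed

lemma sorted_hd_le_le_last: "sorted xs \<Longrightarrow> x \<in> set xs \<Longrightarrow> hd xs \<le> x \<and> x \<le> last xs"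
proof (induction xs)
  case (Cons y ys)
  then show ?case by (cases ys) auto
qed auto

lemma partitions_subset: "ts \<in> partitions u v \<Longrightarrow> set ts \<subseteq> {u..v}"
  using sorted_hd_le_le_last by (fastforce simp: partitions_def)

lemma two_point_partition: "u \<le> v \<Longrightarrow> [u, v] \<in> partitions u v"
  by (simp add: partitions_def)

lemma partitions_append_tl:
  assumes "ts1 \<in> partitions u v" "ts2 \<in> partitions v w"
  shows "ts1 @ tl ts2 \<in> partitions u w"
proof -
  have ne: "ts1 \<noteq> []" "ts2 \<noteq> []" and ends: "hd ts1 = u" "last ts1 = v" "hd ts2 = v" "last ts2 = w"
    and sorted: "sorted ts1" "sorted ts2"
    using assms by (simp_all add: partitions_def)
  have ts2: "ts2 = v # tl ts2" using ne(2) ends(3) by (metis list.collapse)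
  have "x \<le> y" if "x \<in> set ts1" "y \<in> set (tl ts2)" for x y
  proof -
    have "x \<le> v" using sorted_hd_le_le_last[OF sorted(1) that(1)] ends(2) by simp
    also have "v \<le> y" using sorted(2) that(2) ts2 by (metis sorted_simps(2))
    finally show ?thesis .
  qed
  then have "sorted (ts1 @ tl ts2)" using sorted by (simp add: sorted_append sorted_tl)
  moreover have "last (ts1 @ tl ts2) = w"
    using ne ends ts2 by (cases "tl ts2") auto
  ultimately show ?thesis using ne ends by (simp add: partitions_def)
qed

lemma partition_split_gap:
  assumes nonneg: "\<And>u v. 0 \<le> f u v" and triangle: "\<And>u v w. f u w \<le> f u v + f v w"
    and ts: "ts \<in> partitions a b" and uv: "a \<le> u" "u \<le> v" "v \<le> b"
    and gap: "\<And>x. x \<in> set ts \<Longrightarrow> x \<le> u \<or> v \<le> x"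
  shows "\<exists>A\<in>partitions a u. \<exists>B\<in>partitions v b.
    chain_sum f ts \<le> chain_sum f A + f u v + chain_sum f B"
proof -
  define xs where "xs = takeWhile (\<lambda>x. x < v) ts"
  define ys where "ys = dropWhile (\<lambda>x. x < v) ts"
  have ts_eq: "ts = xs @ ys" unfolding xs_def ys_def by simp
  have sorted: "sorted ts" and ne: "ts \<noteq> []" and hd: "hd ts = a" and last: "last ts = b"
    using ts by (auto simp: partitions_def)
  have xs_le: "x \<le> u" if "x \<in> set xs" for x
    using that gap set_takeWhileD unfolding xs_def by fastforce
  have "b \<in> set ts" using last ne by auto
  moreover have "b \<notin> set xs" using set_takeWhileD[of b "\<lambda>x. x < v" ts] uv by (auto simp: xs_def)
  ultimately have b_ys: "b \<in> set ys" using ts_eq by auto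
  then obtain y0 ys' where ys: "ys = y0 # ys'" by (cases ys) auto
  have "\<not> y0 < v" using hd_dropWhile[of "\<lambda>x. x < v" ts] ys unfolding ys_def by (metis list.discI list.sel(1))
  moreover have sorted_ys: "sorted ys" unfolding ys_def by (rule sorted_dropWhile[OF sorted])
  ultimately have ys_ge: "v \<le> y" if "y \<in> set ys" for y
    using that ys by auto
  have "xs @ [u] \<in> partitions a u"
  proof -
    have "sorted (xs @ [u])"
      using sorted_takeWhile[OF sorted] xs_le by (simp add: sorted_append xs_def)
    moreover have "hd (xs @ [u]) = a"
      using hd ts_eq ys_ge[of "hd ts"] xs_le uv ys by (cases xs) auto
    ultimately show ?thesis by (simp add: partitions_def)
  qed
  moreover have "v # ys \<in> partitions v b"
  proof -
    have "last ys = b"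
      using dropWhile_last[of b ts "\<lambda>x. x < v"] b_ys uv last set_dropWhileD
      unfolding ys_def by fastforce
    then show ?thesis
      using sorted_ys ys_ge ys by (simp add: partitions_def)
  qed
  moreover have "chain_sum f ts \<le> chain_sum f (xs @ u # v # ys)"
    using chain_sum_insert[of f xs ys v] chain_sum_insert[of f xs "v # ys" u] nonneg triangle ts_eq
    by fastforce
  then have "chain_sum f ts \<le> chain_sum f (xs @ [u]) + f u v + chain_sum f (v # ys)"
    using chain_sum_append[of f xs u "v # ys"] by simp
  ultimately show ?thesis by blast
qed

lemma curve_length_partitions:
  "curve_length \<rho> \<gamma> u v = (SUP ts\<in>partitions u v. ennreal (chain_sum (\<lambda>s t. \<rho> (\<gamma> s) (\<gamma> t)) ts))"
  by (simp add: curve_length_def chain_sum_def partitions_def)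

lemma chain_sum_le_curve_length:
  "ts \<in> partitions u v \<Longrightarrow> ennreal (chain_sum (\<lambda>s t. \<rho> (\<gamma> s) (\<gamma> t)) ts) \<le> curve_length \<rho> \<gamma> u v"
  unfolding curve_length_partitions by (rule SUP_upper)

lemma curve_length_ge_dist: "u \<le> v \<Longrightarrow> ennreal (\<rho> (\<gamma> u) (\<gamma> v)) \<le> curve_length \<rho> \<gamma> u v"
  using chain_sum_le_curve_length[OF two_point_partition] by simp

lemma curve_length_superadditive:
  assumes nonneg: "\<And>x y. 0 \<le> \<rho> x y" and "u \<le> v" "v \<le> w"
  shows "curve_length \<rho> \<gamma> u v + curve_length \<rho> \<gamma> v w \<le> curve_length \<rho> \<gamma> u w"
proof -
  let ?f = "\<lambda>s t. \<rho> (\<gamma> s) (\<gamma> t)"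
  have ne: "partitions u v \<noteq> {}" "partitions v w \<noteq> {}"
    using two_point_partition assms by blast+
  have "ennreal (chain_sum ?f ts1) + ennreal (chain_sum ?f ts2) \<le> curve_length \<rho> \<gamma> u w"
    if ts: "ts1 \<in> partitions u v" "ts2 \<in> partitions v w" for ts1 ts2
  proof -
    have "chain_sum ?f (ts1 @ tl ts2) = chain_sum ?f ts1 + chain_sum ?f ts2"
      using ts by (intro chain_sum_append_tl) (auto simp: partitions_def)
    then have "ennreal (chain_sum ?f ts1) + ennreal (chain_sum ?f ts2) = ennreal (chain_sum ?f (ts1 @ tl ts2))"
      by (simp add: ennreal_plus chain_sum_nonneg nonneg)
    also have "\<dots> \<le> curve_length \<rho> \<gamma> u w"
      by (rule chain_sum_le_curve_length[OF partitions_append_tl[OF ts]])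
    finally show ?thesis .
  qed
  then show ?thesis
    unfolding curve_length_partitions[of _ _ u v] curve_length_partitions[of _ _ v w]
      ennreal_SUP_add_right[OF ne(2)] ennreal_SUP_add_left[OF ne(1), symmetric]
    by (intro SUP_least) blast
qed

lemma curve_length_scaled_mono:
  assumes "0 \<le> c"
    and "\<And>s t. s \<in> {u..v} \<Longrightarrow> t \<in> {u..v} \<Longrightarrow> c * \<rho>1 (\<gamma>1 s) (\<gamma>1 t) \<le> \<rho>2 (\<gamma>2 s) (\<gamma>2 t)"
  shows "ennreal c * curve_length \<rho>1 \<gamma>1 u v \<le> curve_length \<rho>2 \<gamma>2 u v"
  unfolding curve_length_partitions SUP_mult_left_ennreal
proof (rule SUP_mono)
  fix ts assume ts: "ts \<in> partitions u v"
  have "c * chain_sum (\<lambda>s t. \<rho>1 (\<gamma>1 s) (\<gamma>1 t)) ts \<le> chain_sum (\<lambda>s t. \<rho>2 (\<gamma>2 s) (\<gamma>2 t)) ts"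
    by (rule chain_sum_scaled_mono[OF partitions_subset[OF ts]]) (use assms(2) in auto)
  then show "\<exists>ts'\<in>partitions u v. ennreal c * ennreal (chain_sum (\<lambda>s t. \<rho>1 (\<gamma>1 s) (\<gamma>1 t)) ts)
      \<le> ennreal (chain_sum (\<lambda>s t. \<rho>2 (\<gamma>2 s) (\<gamma>2 t)) ts')"
    using ts assms(1) by (intro bexI[of _ ts]) (simp_all add: ennreal_mult'[symmetric] ennreal_leI)
qed

locale rectifiable_path = Metric_space "UNIV :: 'b set" \<rho> for \<rho> :: "'b \<Rightarrow> 'b \<Rightarrow> real" +
  fixes \<gamma> :: "real \<Rightarrow> 'b" and a b :: real
  assumes le: "a \<le> b"
    and continuous: "continuous_map (top_of_set {a..b}) mtopology \<gamma>"
    and finite_length: "curve_length \<rho> \<gamma> a b < \<infinity>"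
begin

lemma curve_length_subadditive:
  assumes "u \<le> v" "v \<le> w"
  shows "curve_length \<rho> \<gamma> u w \<le> curve_length \<rho> \<gamma> u v + curve_length \<rho> \<gamma> v w"
  unfolding curve_length_partitions[of _ _ u w]
proof (rule SUP_least)
  let ?f = "\<lambda>s t. \<rho> (\<gamma> s) (\<gamma> t)"
  fix ts assume "ts \<in> partitions u w"
  then obtain A B where AB: "A \<in> partitions u v" "B \<in> partitions v w"
    and le: "chain_sum ?f ts \<le> chain_sum ?f A + chain_sum ?f B"
    using partition_split_gap[of ?f ts u w v v] assms triangle by fastforce
  have "ennreal (chain_sum ?f ts) \<le> ennreal (chain_sum ?f A) + ennreal (chain_sum ?f B)"
    using le by (simp add: ennreal_plus[symmetric] chain_sum_nonneg del: ennreal_plus)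
  also have "\<dots> \<le> curve_length \<rho> \<gamma> u v + curve_length \<rho> \<gamma> v w"
    using AB by (intro add_mono chain_sum_le_curve_length)
  finally show "ennreal (chain_sum ?f ts) \<le> curve_length \<rho> \<gamma> u v + curve_length \<rho> \<gamma> v w" .
qed

definition len :: "real \<Rightarrow> real \<Rightarrow> real" where
  "len u v = enn2real (curve_length \<rho> \<gamma> u v)"

lemma curve_length_eq_len:
  assumes "a \<le> u" "u \<le> v" "v \<le> b"
  shows "curve_length \<rho> \<gamma> u v = ennreal (len u v)"
proof -
  have "curve_length \<rho> \<gamma> u v \<le> curve_length \<rho> \<gamma> a u + curve_length \<rho> \<gamma> u v + curve_length \<rho> \<gamma> v b"
    by (simp add: add_increasing2)
  also have "\<dots> \<le> curve_length \<rho> \<gamma> a b"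
    using curve_length_superadditive[of \<rho> a u v \<gamma>] curve_length_superadditive[of \<rho> a v b \<gamma>] assms
    by (meson add_right_mono nonneg order_trans)
  finally show ?thesis
    using finite_length by (simp add: len_def ennreal_enn2real_if top.not_eq_extremum)
qed

lemma len_nonneg: "0 \<le> len u v"
  by (simp add: len_def)

lemma len_add:
  assumes "a \<le> u" "u \<le> v" "v \<le> w" "w \<le> b"
  shows "len u w = len u v + len v w"
proof -
  have "curve_length \<rho> \<gamma> u w = curve_length \<rho> \<gamma> u v + curve_length \<rho> \<gamma> v w"
    using curve_length_superadditive[of \<rho> u v w \<gamma>] curve_length_subadditive[of u v w] assms
    by (simp add: order_antisym)
  then show ?thesis
    using assms by (simp add: curve_length_eq_len len_nonneg flip: ennreal_plus)
qed

lemma dist_le_len: "a \<le> u \<Longrightarrow> u \<le> v \<Longrightarrow> v \<le> b \<Longrightarrow> \<rho> (\<gamma> u) (\<gamma> v) \<le> len u v"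
  using curve_length_ge_dist[of u v \<rho> \<gamma>] by (simp add: curve_length_eq_len len_nonneg)

lemma partition_almost_maximal:
  assumes "a \<le> u" "u \<le> v" "v \<le> b" "0 < \<epsilon>"
  obtains ts where "ts \<in> partitions u v" "len u v - \<epsilon> < chain_sum (\<lambda>s t. \<rho> (\<gamma> s) (\<gamma> t)) ts"
proof (cases "len u v - \<epsilon> < 0")
  case True
  then show ?thesis
    using that[OF two_point_partition[OF assms(2)]] nonneg[of "\<gamma> u" "\<gamma> v"] by simp
next
  case False
  then have "ennreal (len u v - \<epsilon>) < curve_length \<rho> \<gamma> u v"
    using assms by (simp add: curve_length_eq_len ennreal_lessI)
  then obtain ts where "ts \<in> partitions u v"
    "ennreal (len u v - \<epsilon>) < ennreal (chain_sum (\<lambda>s t. \<rho> (\<gamma> s) (\<gamma> t)) ts)"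
    unfolding curve_length_partitions less_SUP_iff by blast
  then show ?thesis
    using that False by (simp add: ennreal_less_iff)
qed

lemma continuity_modulus:
  assumes "t \<in> {a..b}" "0 < \<epsilon>"
  obtains \<delta> where "0 < \<delta>" "\<And>t'. t' \<in> {a..b} \<Longrightarrow> \<bar>t' - t\<bar> < \<delta> \<Longrightarrow> \<rho> (\<gamma> t) (\<gamma> t') < \<epsilon>"
proof -
  obtain U where U: "openin (top_of_set {a..b}) U" "t \<in> U" "\<forall>y\<in>U. \<rho> (\<gamma> t) (\<gamma> y) < \<epsilon>"
  proof -
    have "\<exists>U. openin (top_of_set {a..b}) U \<and> t \<in> U \<and> (\<forall>y\<in>U. \<gamma> y \<in> mball (\<gamma> t) \<epsilon>)"
      using continuous assms unfolding continuous_map_to_metric by simp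
    then show ?thesis using that by auto
  qed
  then obtain T where T: "open T" "U = T \<inter> {a..b}"
    by (auto simp: openin_open)
  then obtain \<delta> where "0 < \<delta>" "ball t \<delta> \<subseteq> T"
    using U(2) open_contains_ball by blast
  moreover have "t' \<in> U" if "t' \<in> {a..b}" "\<bar>t' - t\<bar> < \<delta>" "ball t \<delta> \<subseteq> T" for t'
    using that T by (auto simp: dist_real_def)
  ultimately show ?thesis
    using that U(3) by blast
qed

text \<open>Continuity of the arc length: near \<open>t\<^sub>0\<close>, an almost maximal partition of \<open>[a, b]\<close> has no
  points other than \<open>t\<^sub>0\<close>, so cutting it at a short interval with endpoint \<open>t\<^sub>0\<close> loses
  only the chord of that interval.\<close>
lemma len_small_near:
  assumes t0: "t0 \<in> {a..b}" and "0 < \<epsilon>"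
  obtains \<delta> where "0 < \<delta>"
    "\<And>u v. a \<le> u \<Longrightarrow> u \<le> v \<Longrightarrow> v \<le> b \<Longrightarrow> t0 \<in> {u, v} \<Longrightarrow> v - u < \<delta> \<Longrightarrow> len u v < \<epsilon>"
proof -
  let ?f = "\<lambda>s t. \<rho> (\<gamma> s) (\<gamma> t)"
  obtain P where P: "P \<in> partitions a b" and P_big: "len a b - \<epsilon>/2 < chain_sum ?f P"
    using partition_almost_maximal[of a b "\<epsilon>/2"] le assms by auto
  obtain \<delta>1 where \<delta>1: "0 < \<delta>1" "\<And>t'. t' \<in> {a..b} \<Longrightarrow> \<bar>t' - t0\<bar> < \<delta>1 \<Longrightarrow> ?f t0 t' < \<epsilon>/2"
    using continuity_modulus[OF t0, of "\<epsilon>/2"] assms by auto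
  define \<delta> where "\<delta> = Min (insert \<delta>1 ((\<lambda>x. \<bar>x - t0\<bar>) ` (set P - {t0})))"
  have \<delta>: "0 < \<delta>" "\<delta> \<le> \<delta>1" "\<And>x. x \<in> set P \<Longrightarrow> x \<noteq> t0 \<Longrightarrow> \<delta> \<le> \<bar>x - t0\<bar>"
    using \<delta>1 by (auto simp: \<delta>_def)
  show ?thesis
  proof (rule that[OF \<delta>(1)])
    fix u v assume uv: "a \<le> u" "u \<le> v" "v \<le> b" "t0 \<in> {u, v}" "v - u < \<delta>"
    have "x \<le> u \<or> v \<le> x" if "x \<in> set P" for x
      using \<delta>(3)[OF that] uv by force
    then obtain A B where AB: "A \<in> partitions a u" "B \<in> partitions v b"
      and split: "chain_sum ?f P \<le> chain_sum ?f A + ?f u v + chain_sum ?f B"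
      using partition_split_gap[of ?f P a b u v] P uv triangle by fastforce
    have "chain_sum ?f A \<le> len a u" "chain_sum ?f B \<le> len v b"
      using chain_sum_le_curve_length[OF AB(1), of \<rho> \<gamma>] chain_sum_le_curve_length[OF AB(2), of \<rho> \<gamma>] uv
      by (simp_all add: curve_length_eq_len len_nonneg)
    moreover have "?f u v < \<epsilon>/2"
      using \<delta>1(2)[of u] \<delta>1(2)[of v] \<delta>(2) uv commute by auto
    moreover have "len a b = len a u + len u v + len v b"
      using len_add[of a u b] len_add[of u v b] uv le by simp
    ultimately show "len u v < \<epsilon>"
      using P_big split by linarith
  qed
qed

definition arclength :: "real \<Rightarrow> real" where
  "arclength t = len a t"

lemma arclength_diff: "a \<le> u \<Longrightarrow> u \<le> v \<Longrightarrow> v \<le> b \<Longrightarrow> arclength v - arclength u = len u v"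
  unfolding arclength_def using len_add[of a u v] le by simp

lemma arclength_mono: "a \<le> u \<Longrightarrow> u \<le> v \<Longrightarrow> v \<le> b \<Longrightarrow> arclength u \<le> arclength v"
  using arclength_diff[of u v] len_nonneg[of u v] by simp

lemma arclength_start [simp]: "arclength a = 0"
  using arclength_diff[of a a] le by (simp add: arclength_def)

lemma arclength_nonneg: "0 \<le> arclength t"
  by (simp add: arclength_def len_nonneg)

lemma dist_le_arclength_diff:
  assumes "u \<in> {a..b}" "v \<in> {a..b}"
  shows "\<rho> (\<gamma> u) (\<gamma> v) \<le> \<bar>arclength u - arclength v\<bar>"
proof (cases "u \<le> v")
  case True
  then show ?thesis using dist_le_len[of u v] arclength_diff[of u v] assms by auto
next
  case False
  then show ?thesis using dist_le_len[of v u] arclength_diff[of v u] assms commute by auto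
qed

lemma continuous_on_arclength: "continuous_on {a..b} arclength"
  unfolding continuous_on_iff
proof (intro ballI allI impI)
  fix x \<epsilon> :: real assume x: "x \<in> {a..b}" and "0 < \<epsilon>"
  obtain \<delta> where \<delta>: "0 < \<delta>"
    "\<And>u v. a \<le> u \<Longrightarrow> u \<le> v \<Longrightarrow> v \<le> b \<Longrightarrow> x \<in> {u, v} \<Longrightarrow> v - u < \<delta> \<Longrightarrow> len u v < \<epsilon>"
    using len_small_near[OF x \<open>0 < \<epsilon>\<close>] by blast
  have "dist (arclength x') (arclength x) < \<epsilon>" if "x' \<in> {a..b}" "dist x' x < \<delta>" for x'
  proof (cases "x \<le> x'")
    case True
    then show ?thesis using \<delta>(2)[of x x'] arclength_diff[of x x'] len_nonneg[of x x'] that x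
      by (simp add: dist_real_def)
  next
    case False
    then show ?thesis using \<delta>(2)[of x' x] arclength_diff[of x' x] len_nonneg[of x' x] that x
      by (simp add: dist_real_def)
  qed
  then show "\<exists>\<delta>>0. \<forall>x'\<in>{a..b}. dist x' x < \<delta> \<longrightarrow> dist (arclength x') (arclength x) < \<epsilon>"
    using \<delta>(1) by blast
qed

text \<open>The same choice as in \<open>line_integral\<close>.\<close>
definition param :: "real \<Rightarrow> real" where
  "param \<sigma> = (SOME u. a \<le> u \<and> u \<le> b \<and> arclength u = \<sigma>)"

lemma param:
  assumes "0 \<le> \<sigma>" "\<sigma> \<le> arclength b"
  shows "a \<le> param \<sigma> \<and> param \<sigma> \<le> b \<and> arclength (param \<sigma>) = \<sigma>"
  unfolding param_def
proof (rule someI_ex)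
  show "\<exists>u. a \<le> u \<and> u \<le> b \<and> arclength u = \<sigma>"
    using IVT'[of arclength a \<sigma> b] continuous_on_arclength le assms by auto
qed

lemma eq_if_arclength_eq:
  "u \<in> {a..b} \<Longrightarrow> v \<in> {a..b} \<Longrightarrow> arclength u = arclength v \<Longrightarrow> \<gamma> u = \<gamma> v"
  using dist_le_arclength_diff[of u v] nonneg[of "\<gamma> u" "\<gamma> v"] by simp

definition clamp :: "real \<Rightarrow> real" where
  "clamp \<sigma> = max 0 (min (arclength b) \<sigma>)"

lemma clamp: "0 \<le> clamp \<sigma>" "clamp \<sigma> \<le> arclength b" "\<bar>clamp \<sigma> - clamp \<tau>\<bar> \<le> \<bar>\<sigma> - \<tau>\<bar>"
  "\<sigma> \<le> \<tau> \<Longrightarrow> clamp \<sigma> \<le> clamp \<tau>" "0 \<le> \<sigma> \<Longrightarrow> \<sigma> \<le> arclength b \<Longrightarrow> clamp \<sigma> = \<sigma>"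
  unfolding clamp_def using arclength_nonneg[of b] by auto

text \<open>The arc length parametrization used by \<open>line_integral\<close>, extended constantly outside
  \<open>[0, arclength b]\<close>.\<close>
definition unit_speed :: "real \<Rightarrow> 'b" where
  "unit_speed \<sigma> = \<gamma> (param (clamp \<sigma>))"

lemma unit_speed_lipschitz: "\<rho> (unit_speed \<sigma>) (unit_speed \<tau>) \<le> \<bar>\<sigma> - \<tau>\<bar>"
  using dist_le_arclength_diff[of "param (clamp \<sigma>)" "param (clamp \<tau>)"]
    param[OF clamp(1,2), of \<sigma>] param[OF clamp(1,2), of \<tau>] clamp(3)[of \<sigma> \<tau>]
  by (simp add: unit_speed_def)

lemma continuous_map_unit_speed: "continuous_map euclidean mtopology unit_speed"
  unfolding continuous_map_to_metric
proof (intro ballI allI impI)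
  fix \<sigma> \<epsilon> :: real assume "0 < \<epsilon>"
  have "unit_speed \<tau> \<in> mball (unit_speed \<sigma>) \<epsilon>" if "\<tau> \<in> ball \<sigma> \<epsilon>" for \<tau>
    using that unit_speed_lipschitz[of \<sigma> \<tau>] by (simp add: dist_real_def)
  then show "\<exists>U. openin euclidean U \<and> \<sigma> \<in> U \<and> (\<forall>\<tau>\<in>U. unit_speed \<tau> \<in> mball (unit_speed \<sigma>) \<epsilon>)"
    using \<open>0 < \<epsilon>\<close> by (intro exI[of _ "ball \<sigma> \<epsilon>"]) auto
qed

lemma line_integral_unit_speed:
  "line_integral \<rho> (a, b, \<gamma>) g = (\<integral>\<^sup>+\<sigma>. g (unit_speed \<sigma>) * indicator {0..arclength b} \<sigma> \<partial>lborel)"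
  unfolding line_integral_def Let_def prod.case
proof (rule nn_integral_cong)
  fix \<sigma> :: real
  show "g (\<gamma> (SOME u. a \<le> u \<and> u \<le> b \<and> enn2real (curve_length \<rho> \<gamma> a u) = \<sigma>))
      * indicator {0..enn2real (curve_length \<rho> \<gamma> a b)} \<sigma>
    = g (unit_speed \<sigma>) * indicator {0..arclength b} \<sigma>"
    by (cases "0 \<le> \<sigma> \<and> \<sigma> \<le> arclength b")
      (auto simp: unit_speed_def clamp param_def arclength_def len_def)
qed

end

section \<open>A change of variables inequality on the real line\<close>

lemma Int_stable_Ioc: "Int_stable (range (\<lambda>(x, y). {x<..y::real}))"
proof (rule Int_stableI_image)
  fix i j :: "real \<times> real"
  obtain x1 y1 x2 y2 where "i = (x1, y1)" "j = (x2, y2)" by (cases i, cases j)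
  then show "\<exists>k\<in>UNIV. (\<lambda>(x, y). {x<..y}) i \<inter> (\<lambda>(x, y). {x<..y}) j = (\<lambda>(x, y). {x<..y::real}) k"
    by (intro bexI[of _ "(max x1 x2, min y1 y2)"]) auto
qed

lemma measure_eq_add_of_Ioc:
  assumes N: "finite_borel_measure N" and K: "finite_borel_measure K" and M: "finite_borel_measure M"
    and Ioc: "\<And>x y. x \<le> y \<Longrightarrow> measure N {x<..y} = measure K {x<..y} + c * measure M {x<..y}"
    and A: "A \<in> sets borel"
  shows "measure N A = measure K A + c * measure M A"
proof -
  interpret N: finite_borel_measure N by (rule N)
  interpret K: finite_borel_measure K by (rule K)
  interpret M: finite_borel_measure M by (rule M)
  let ?P = "\<lambda>A. measure N A = measure K A + c * measure M A"
  define I where "I n = {- real n <.. real n}" for n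
  have I: "incseq I" "(\<Union>n. I n) = UNIV" "range I \<subseteq> sets borel"
    unfolding I_def incseq_def by (auto simp: UN_Ioc_eq_UNIV)
  have UNIV: "?P UNIV"
  proof -
    have "(\<lambda>n. measure N (I n)) \<longlonglongrightarrow> measure N UNIV"
      using N.finite_Lim_measure_incseq[of I] I by (simp add: N.M_is_borel)
    moreover have "(\<lambda>n. measure K (I n) + c * measure M (I n)) \<longlonglongrightarrow> measure K UNIV + c * measure M UNIV"
      using K.finite_Lim_measure_incseq[of I] M.finite_Lim_measure_incseq[of I] I
      by (intro tendsto_intros) (auto simp: K.M_is_borel M.M_is_borel)
    moreover have "measure N (I n) = measure K (I n) + c * measure M (I n)" for n
      unfolding I_def by (rule Ioc) simp
    ultimately show ?thesis using LIMSEQ_unique by simp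
  qed
  note Int_stable_Ioc
  moreover have "range (\<lambda>(x, y). {x<..y::real}) \<subseteq> Pow UNIV" by simp
  moreover have "A \<in> sigma_sets UNIV (range (\<lambda>(x, y). {x<..y::real}))"
    using A by (simp add: borel_sigma_sets_Ioc)
  ultimately show ?thesis
  proof (induction rule: sigma_sets_induct_disjoint)
    case (basic A)
    then obtain x y where "A = {x<..y}" by auto
    then show ?case using Ioc[of x y] by (cases "x \<le> y") auto
  next
    case (compl A)
    then have "A \<in> sets borel" by (simp add: borel_sigma_sets_Ioc)
    then show ?case
      using N.finite_measure_compl[of A] K.finite_measure_compl[of A] M.finite_measure_compl[of A]
        UNIV compl.IH
      by (simp add: N.M_is_borel K.M_is_borel M.M_is_borel N.borel_UNIV K.borel_UNIV M.borel_UNIV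
          right_diff_distrib)
  next
    case (union A)
    then have "range A \<subseteq> sets borel" by (simp add: borel_sigma_sets_Ioc)
    then have "(\<lambda>i. measure N (A i)) sums measure N (\<Union>i. A i)"
      and "(\<lambda>i. measure K (A i) + c * measure M (A i)) sums (measure K (\<Union>i. A i) + c * measure M (\<Union>i. A i))"
      using N.finite_measure_UNION[of A] K.finite_measure_UNION[of A] M.finite_measure_UNION[of A] union.hyps
      by (auto intro!: sums_add sums_mult)
    then show ?case using union.IH sums_unique2 by (metis (no_types, lifting) sums_cong)
  qed auto
qed

text \<open>\<open>N - c M\<close> is the Lebesgue-Stieltjes measure of the nondecreasing function
  \<open>cdf N - c cdf M\<close>.\<close>
lemma finite_borel_measure_difference:
  assumes N: "finite_borel_measure N" and M: "finite_borel_measure M" and "0 \<le> c"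
    and Ioc: "\<And>x y. x \<le> y \<Longrightarrow> c * measure M {x<..y} \<le> measure N {x<..y}"
  obtains K where "finite_borel_measure K"
    "\<And>x y. x \<le> y \<Longrightarrow> measure N {x<..y} = measure K {x<..y} + c * measure M {x<..y}"
proof -
  interpret N: finite_borel_measure N by (rule N)
  interpret M: finite_borel_measure M by (rule M)
  define F where "F x = cdf N x - c * cdf M x" for x
  have F_diff: "F y - F x = measure N {x<..y} - c * measure M {x<..y}" if "x \<le> y" for x y
  proof (cases "x = y")
    case False
    then show ?thesis
      using that M.cdf_diff_eq[of x y] N.cdf_diff_eq[of x y] by (simp add: F_def algebra_simps)
  qed (simp add: F_def)
  have F_mono: "F x \<le> F y" if "x \<le> y" for x y
    using F_diff[OF that] Ioc[OF that] by simp
  have F_cont: "continuous (at_right x) F" for x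
    unfolding F_def by (intro continuous_intros M.cdf_is_right_cont N.cdf_is_right_cont)
  define K where "K = interval_measure F"
  have K_Ioc: "emeasure K {x<..y} = ennreal (measure N {x<..y} - c * measure M {x<..y})" if "x \<le> y" for x y
    unfolding K_def using emeasure_interval_measure_Ioc[OF that F_mono F_cont] F_diff[OF that] by simp
  have "emeasure K {- real n<..real n} \<le> emeasure N UNIV" for n :: nat
  proof -
    have "measure N {- real n<..real n} \<le> measure N UNIV"
      by (rule N.finite_measure_mono) (simp_all add: N.M_is_borel)
    moreover have "0 \<le> c * measure M {- real n<..real n}"
      using \<open>0 \<le> c\<close> by simp
    ultimately show ?thesis
      using K_Ioc[of "- real n" "real n"] N.emeasure_eq_measure[of UNIV] by (simp add: ennreal_leI)
  qed
  moreover have "emeasure K UNIV = (SUP n. emeasure K {- real n<..real n})"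
    using SUP_emeasure_incseq[of "\<lambda>n. {- real n<..real n}" K]
    by (simp add: K_def UN_Ioc_eq_UNIV image_subset_iff incseq_def subset_eq)
  ultimately have "emeasure K UNIV \<le> emeasure N UNIV"
    by (auto intro!: SUP_least)
  then have "emeasure K UNIV < \<infinity>"
    by (rule order.strict_trans1) (simp add: less_top[symmetric])
  then have "finite_borel_measure K"
    unfolding finite_borel_measure_def finite_borel_measure_axioms_def
    by (auto intro!: finite_measureI simp: K_def)
  then show ?thesis
    using that K_Ioc Ioc by (simp add: measure_def)
qed

lemma measure_le_of_Ioc:
  assumes N: "finite_borel_measure N" and M: "finite_borel_measure M" and "0 \<le> c"
    and Ioc: "\<And>x y. x \<le> y \<Longrightarrow> c * measure M {x<..y} \<le> measure N {x<..y}"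
    and A: "A \<in> sets borel"
  shows "c * measure M A \<le> measure N A"
proof -
  obtain K where K: "finite_borel_measure K"
    and K_Ioc: "\<And>x y. x \<le> y \<Longrightarrow> measure N {x<..y} = measure K {x<..y} + c * measure M {x<..y}"
    using finite_borel_measure_difference[OF N M \<open>0 \<le> c\<close> Ioc] by blast
  have "measure N A = measure K A + c * measure M A"
    by (rule measure_eq_add_of_Ioc[OF N K M K_Ioc A])
  then show ?thesis by simp
qed

lemma nn_integral_le_of_Ioc:
  assumes N: "finite_borel_measure N" and M: "finite_borel_measure M" and "0 \<le> c"
    and Ioc: "\<And>x y. x \<le> y \<Longrightarrow> c * measure M {x<..y} \<le> measure N {x<..y}"
    and f: "f \<in> borel_measurable borel"
  shows "ennreal c * (\<integral>\<^sup>+x. f x \<partial>M) \<le> (\<integral>\<^sup>+x. f x \<partial>N)"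
proof -
  interpret N: finite_borel_measure N by (rule N)
  interpret M: finite_borel_measure M by (rule M)
  have "ennreal c * (\<integral>\<^sup>+x. f x \<partial>M) = (\<integral>\<^sup>+x. f x \<partial>scale_measure (ennreal c) M)"
    using f by (simp add: nn_integral_scale_measure measurable_cong_sets[OF M.M_is_borel refl])
  also have "\<dots> \<le> (\<integral>\<^sup>+x. f x \<partial>N)"
  proof (rule nn_integral_mono_measure)
    show "sets (scale_measure (ennreal c) M) = sets N"
      by (simp add: M.M_is_borel N.M_is_borel)
    have "emeasure (scale_measure (ennreal c) M) A \<le> emeasure N A" for A
    proof (cases "A \<in> sets borel")
      case True
      then show ?thesis
        using measure_le_of_Ioc[OF N M \<open>0 \<le> c\<close> Ioc True] \<open>0 \<le> c\<close>
        by (simp add: M.emeasure_eq_measure N.emeasure_eq_measure ennreal_mult'[symmetric] ennreal_leI)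
    next
      case False
      then show ?thesis by (simp add: emeasure_notin_sets M.M_is_borel)
    qed
    then show "scale_measure (ennreal c) M \<le> N"
      by (simp add: le_measure_iff le_fun_def M.M_is_borel N.M_is_borel N.borel_UNIV M.borel_UNIV)
  qed
  finally show ?thesis .
qed

lemma lipschitz_on_if_increments_bounded:
  fixes \<phi> :: "real \<Rightarrow> real"
  assumes "0 < c" and "\<And>\<tau> \<tau>'. \<tau> \<le> \<tau>' \<Longrightarrow> 0 \<le> \<phi> \<tau>' - \<phi> \<tau> \<and> c * (\<phi> \<tau>' - \<phi> \<tau>) \<le> \<tau>' - \<tau>"
  shows "(1 / c)-lipschitz_on UNIV \<phi>"
proof (rule lipschitz_onI)
  fix \<tau> \<tau>' :: real
  have "c * \<bar>\<phi> \<tau> - \<phi> \<tau>'\<bar> \<le> \<bar>\<tau> - \<tau>'\<bar>"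
    using assms(2)[of \<tau> \<tau>'] assms(2)[of \<tau>' \<tau>] by (cases "\<tau> \<le> \<tau>'") (auto simp: abs_if)
  then show "dist (\<phi> \<tau>) (\<phi> \<tau>') \<le> 1 / c * dist \<tau> \<tau>'"
    using \<open>0 < c\<close> by (simp add: dist_real_def field_simps)
qed (use \<open>0 < c\<close> in simp)

lemma last_point_below:
  fixes \<phi> :: "real \<Rightarrow> real"
  assumes "continuous_on UNIV \<phi>" "0 \<le> L" "\<phi> 0 \<le> x"
  obtains t where "0 \<le> t" "t \<le> L" "\<phi> t \<le> x" "\<And>\<tau>. t < \<tau> \<Longrightarrow> \<tau> \<le> L \<Longrightarrow> x < \<phi> \<tau>"
proof -
  define U where "U = {0..L} \<inter> {\<tau>. \<phi> \<tau> \<le> x}"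
  have "0 \<in> U"
    using assms by (simp add: U_def)
  moreover have "closed U"
    unfolding U_def using assms(1) by (intro closed_Int closed_atLeastAtMost closed_Collect_le continuous_on_const)
  moreover have "bdd_above U"
    unfolding U_def by (rule bdd_aboveI[of _ L]) auto
  ultimately have "Sup U \<in> U"
    by (intro closed_contains_Sup) auto
  moreover have "x < \<phi> \<tau>" if "Sup U < \<tau>" "\<tau> \<le> L" for \<tau>
  proof (rule ccontr)
    assume "\<not> x < \<phi> \<tau>"
    then have "\<tau> \<in> U" using that \<open>Sup U \<in> U\<close> by (auto simp: U_def)
    then have "\<tau> \<le> Sup U" using \<open>bdd_above U\<close> by (rule cSup_upper)
    then show False using that by simp
  qed
  ultimately show ?thesis
    using that[of "Sup U"] by (auto simp: U_def)
qed

lemma lborel_preimage_Ioc_ge: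
  fixes \<phi> :: "real \<Rightarrow> real"
  assumes "0 < c" and mono_lip: "\<And>\<tau> \<tau>'. \<tau> \<le> \<tau>' \<Longrightarrow> 0 \<le> \<phi> \<tau>' - \<phi> \<tau> \<and> c * (\<phi> \<tau>' - \<phi> \<tau>) \<le> \<tau>' - \<tau>"
    and "\<phi> 0 = 0" "\<phi> L2 = L1" "0 \<le> L2"
    and xy: "0 \<le> x" "x \<le> y" "y \<le> L1"
  shows "c * (y - x) \<le> measure lborel ({\<tau>. x < \<phi> \<tau> \<and> \<phi> \<tau> \<le> y} \<inter> {0..L2})"
proof -
  have cont: "continuous_on UNIV \<phi>"
    using lipschitz_on_continuous_on[OF lipschitz_on_if_increments_bounded[OF assms(1,2)]] .
  obtain t where t: "0 \<le> t" "t \<le> L2" "\<phi> t \<le> x" and after_t: "\<And>\<tau>. t < \<tau> \<Longrightarrow> \<tau> \<le> L2 \<Longrightarrow> x < \<phi> \<tau>"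
    using last_point_below[OF cont \<open>0 \<le> L2\<close>, of x] assms by auto
  have "c * (y - x) \<le> c * (L1 - \<phi> t)"
    using \<open>0 < c\<close> t xy by (intro mult_left_mono) auto
  also have "\<dots> \<le> L2 - t"
    using mono_lip[of t L2] t assms by simp
  finally have end_le: "t + c * (y - x) \<le> L2" by simp
  have "{t<..t + c * (y - x)} \<subseteq> {\<tau>. x < \<phi> \<tau> \<and> \<phi> \<tau> \<le> y} \<inter> {0..L2}"
  proof
    fix \<tau> assume \<tau>: "\<tau> \<in> {t<..t + c * (y - x)}"
    then have "c * (\<phi> \<tau> - \<phi> t) \<le> c * (y - x)"
      using mono_lip[of t \<tau>] by simp
    then have "\<phi> \<tau> \<le> y"
      using \<open>0 < c\<close> t by simp
    then show "\<tau> \<in> {\<tau>. x < \<phi> \<tau> \<and> \<phi> \<tau> \<le> y} \<inter> {0..L2}"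
      using after_t[of \<tau>] \<tau> end_le t by auto
  qed
  then have "measure lborel {t<..t + c * (y - x)} \<le> measure lborel ({\<tau>. x < \<phi> \<tau> \<and> \<phi> \<tau> \<le> y} \<inter> {0..L2})"
  proof (rule measure_mono_fmeasurable)
    have [measurable]: "\<phi> \<in> borel_measurable borel"
      by (rule borel_measurable_continuous_onI[OF cont])
    have "{\<tau>. x < \<phi> \<tau> \<and> \<phi> \<tau> \<le> y} \<in> sets lborel"
      by measurable
    moreover have "{0..L2} \<in> fmeasurable lborel"
      by (simp add: fmeasurable_def emeasure_lborel_Icc_eq)
    ultimately show "{\<tau>. x < \<phi> \<tau> \<and> \<phi> \<tau> \<le> y} \<inter> {0..L2} \<in> fmeasurable lborel"
      by (subst Int_commute) (rule fmeasurable_Int_fmeasurable)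
  qed simp
  then show ?thesis
    using \<open>0 < c\<close> xy by simp
qed

lemma measure_Ioc_le_distr:
  fixes \<phi> :: "real \<Rightarrow> real"
  assumes "0 < c" and mono_lip: "\<And>\<tau> \<tau>'. \<tau> \<le> \<tau>' \<Longrightarrow> 0 \<le> \<phi> \<tau>' - \<phi> \<tau> \<and> c * (\<phi> \<tau>' - \<phi> \<tau>) \<le> \<tau>' - \<tau>"
    and "\<phi> 0 = 0" "\<phi> L2 = L1" "0 \<le> L2" and \<phi>_meas [measurable]: "\<phi> \<in> borel_measurable borel"
  shows "c * measure (density lborel (indicator {0..L1})) {x<..y}
    \<le> measure (distr (density lborel (indicator {0..L2})) borel \<phi>) {x<..y}"
proof (cases "max x 0 \<le> min y L1")
  case False
  then have "{0..L1} \<inter> {x<..y} = {}" by auto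
  then show ?thesis by (simp add: measure_restricted)
next
  case True
  have "0 \<le> L1" using mono_lip[of 0 L2] assms by simp
  have "measure lborel ({0..L1} \<inter> {x<..y}) \<le> measure lborel {max x 0..min y L1}"
    by (rule measure_mono_fmeasurable) (auto simp: fmeasurable_def emeasure_lborel_Icc_eq)
  then have "c * measure (density lborel (indicator {0..L1})) {x<..y} \<le> c * (min y L1 - max x 0)"
    using \<open>0 < c\<close> True by (simp add: measure_restricted)
  also have "\<dots> \<le> measure lborel ({\<tau>. max x 0 < \<phi> \<tau> \<and> \<phi> \<tau> \<le> min y L1} \<inter> {0..L2})"
    using True \<open>0 \<le> L1\<close> by (intro lborel_preimage_Ioc_ge[OF assms(1-5)]) auto
  also have "\<dots> \<le> measure lborel ({0..L2} \<inter> \<phi> -` {x<..y})"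
  proof -
    have fm: "{0..L2} \<inter> \<phi> -` {x<..y} \<in> fmeasurable lborel"
      by (rule fmeasurableI2[where A="{0..L2}"])
        (auto simp: fmeasurable_def emeasure_lborel_Icc_eq measurable_sets_borel[OF \<phi>_meas])
    show ?thesis
    proof (rule measure_mono_fmeasurable[OF _ _ fm])
      show "{\<tau>. max x 0 < \<phi> \<tau> \<and> \<phi> \<tau> \<le> min y L1} \<inter> {0..L2} \<in> sets lborel"
        by measurable
    qed auto
  qed
  also have "\<dots> = measure (distr (density lborel (indicator {0..L2})) borel \<phi>) {x<..y}"
    using measurable_sets_borel[OF \<phi>_meas, of "{x<..y}"] by (simp add: measure_distr measure_restricted)
  finally show ?thesis .
qed

lemma nn_integral_Icc_le_comp:
  fixes \<phi> :: "real \<Rightarrow> real"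
  assumes "0 < c" and mono_lip: "\<And>\<tau> \<tau>'. \<tau> \<le> \<tau>' \<Longrightarrow> 0 \<le> \<phi> \<tau>' - \<phi> \<tau> \<and> c * (\<phi> \<tau>' - \<phi> \<tau>) \<le> \<tau>' - \<tau>"
    and "\<phi> 0 = 0" "\<phi> L2 = L1" "0 \<le> L2"
    and h: "h \<in> borel_measurable borel"
  shows "ennreal c * (\<integral>\<^sup>+\<sigma>. h \<sigma> * indicator {0..L1} \<sigma> \<partial>lborel)
    \<le> (\<integral>\<^sup>+\<tau>. h (\<phi> \<tau>) * indicator {0..L2} \<tau> \<partial>lborel)"
proof -
  have \<phi>_meas [measurable]: "\<phi> \<in> borel_measurable borel"
    using lipschitz_on_continuous_on[OF lipschitz_on_if_increments_bounded[OF assms(1,2)]]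
    by (rule borel_measurable_continuous_onI)
  define M where "M = density lborel (indicator {0..L1})"
  define N where "N = distr (density lborel (indicator {0..L2})) borel \<phi>"
  have M: "finite_borel_measure M"
    unfolding finite_borel_measure_def finite_borel_measure_axioms_def M_def
    by (auto intro!: finite_measureI simp: emeasure_restricted emeasure_lborel_Icc_eq)
  have N: "finite_borel_measure N"
    unfolding finite_borel_measure_def finite_borel_measure_axioms_def N_def
    by (auto intro!: finite_measureI simp: emeasure_distr emeasure_restricted emeasure_lborel_Icc_eq)
  have "ennreal c * (\<integral>\<^sup>+\<sigma>. h \<sigma> \<partial>M) \<le> (\<integral>\<^sup>+\<sigma>. h \<sigma> \<partial>N)"
    using \<open>0 < c\<close> measure_Ioc_le_distr[OF assms(1-5) \<phi>_meas]
    by (intro nn_integral_le_of_Ioc[OF N M _ _ h]) (auto simp: M_def N_def)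
  moreover have "(\<integral>\<^sup>+\<sigma>. h \<sigma> \<partial>M) = (\<integral>\<^sup>+\<sigma>. h \<sigma> * indicator {0..L1} \<sigma> \<partial>lborel)"
    unfolding M_def using h by (subst nn_integral_density) (auto simp: mult.commute)
  moreover have "(\<integral>\<^sup>+\<sigma>. h \<sigma> \<partial>N) = (\<integral>\<^sup>+\<tau>. h (\<phi> \<tau>) * indicator {0..L2} \<tau> \<partial>lborel)"
    unfolding N_def using h by (subst nn_integral_distr) (auto simp: nn_integral_density mult.commute)
  ultimately show ?thesis by simp
qed

section \<open>Comparison of line integrals\<close>

lemma borel_of_euclidean: "borel_of euclidean = borel"
  by (simp add: borel_of_def borel_def)

lemma measurable_borel_of:
  assumes "continuous_map T1 T2 f"
  shows "f \<in> measurable (borel_of T1) (borel_of T2)"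
  unfolding borel_of_def
proof (rule measurable_measure_of)
  show "{U. openin T2 U} \<subseteq> Pow (topspace T2)"
    by (auto dest: openin_subset)
  show "f \<in> space (sigma (topspace T1) {U. openin T1 U}) \<rightarrow> topspace T2"
    using assms by (auto simp: space_measure_of_conv continuous_map_def)
  fix U assume "U \<in> {U. openin T2 U}"
  then have "openin T1 {x \<in> topspace T1. f x \<in> U}"
    using assms by (simp add: continuous_map_def)
  moreover have "{x \<in> topspace T1. f x \<in> U} = f -` U \<inter> space (sigma (topspace T1) {U. openin T1 U})"
    by (auto simp: space_measure_of_conv)
  ultimately show "f -` U \<inter> space (sigma (topspace T1) {U. openin T1 U}) \<in> sets (sigma (topspace T1) {U. openin T1 U})"
    by (metis (mono_tags, lifting) mem_Collect_eq openin_subset sigma_sets.Basic sets_measure_of Pow_iff subsetI)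
qed

locale path_pair =
  P1: rectifiable_path \<rho>1 \<gamma>1 a b + P2: rectifiable_path \<rho>2 \<gamma>2 a b
  for \<rho>1 :: "'b \<Rightarrow> 'b \<Rightarrow> real" and \<gamma>1 and \<rho>2 :: "'c \<Rightarrow> 'c \<Rightarrow> real" and \<gamma>2 and a b +
  fixes c :: real
  assumes c_pos: "0 < c"
    and dist_le: "\<And>s t. s \<in> {a..b} \<Longrightarrow> t \<in> {a..b} \<Longrightarrow> c * \<rho>1 (\<gamma>1 s) (\<gamma>1 t) \<le> \<rho>2 (\<gamma>2 s) (\<gamma>2 t)"
begin

lemma arclength_diff_le:
  assumes "u \<in> {a..b}" "v \<in> {a..b}"
  shows "c * \<bar>P1.arclength v - P1.arclength u\<bar> \<le> \<bar>P2.arclength v - P2.arclength u\<bar>"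
proof -
  have *: "c * (P1.arclength v - P1.arclength u) \<le> P2.arclength v - P2.arclength u"
    if "a \<le> u" "u \<le> v" "v \<le> b" for u v
  proof -
    have "ennreal c * curve_length \<rho>1 \<gamma>1 u v \<le> curve_length \<rho>2 \<gamma>2 u v"
      using c_pos dist_le that by (intro curve_length_scaled_mono) auto
    then show ?thesis
      using that c_pos by (simp add: P1.curve_length_eq_len P2.curve_length_eq_len P1.arclength_diff
          P2.arclength_diff ennreal_mult'[symmetric] P1.len_nonneg P2.len_nonneg)
  qed
  show ?thesis
    using *[of u v] *[of v u] assms P1.arclength_mono[of u v] P1.arclength_mono[of v u]
      P2.arclength_mono[of u v] P2.arclength_mono[of v u]
    by (cases "u \<le> v") (auto simp: abs_if)
qed

definition reparam :: "real \<Rightarrow> real" where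
  "reparam \<tau> = P1.arclength (P2.param (P2.clamp \<tau>))"

lemma P2_param_clamp: "P2.param (P2.clamp \<tau>) \<in> {a..b}" "P2.arclength (P2.param (P2.clamp \<tau>)) = P2.clamp \<tau>"
  using P2.param[OF P2.clamp(1,2)] by auto

lemma reparam_increments:
  assumes "\<tau> \<le> \<tau>'"
  shows "0 \<le> reparam \<tau>' - reparam \<tau> \<and> c * (reparam \<tau>' - reparam \<tau>) \<le> \<tau>' - \<tau>"
proof -
  let ?u = "P2.param (P2.clamp \<tau>)" and ?v = "P2.param (P2.clamp \<tau>')"
  have le: "c * \<bar>reparam \<tau>' - reparam \<tau>\<bar> \<le> P2.clamp \<tau>' - P2.clamp \<tau>"
    using arclength_diff_le[of ?v ?u] P2_param_clamp P2.clamp(4)[OF assms]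
    by (simp add: reparam_def abs_minus_commute)
  moreover have "reparam \<tau> \<le> reparam \<tau>'"
  proof (cases "P2.clamp \<tau> = P2.clamp \<tau>'")
    case True
    then show ?thesis using le c_pos by (simp add: mult_le_0_iff)
  next
    case False
    then have "?u \<le> ?v"
      using P2.arclength_mono[of ?v ?u] P2_param_clamp P2.clamp(4)[OF assms] by fastforce
    then show ?thesis
      using P1.arclength_mono P2_param_clamp by (simp add: reparam_def)
  qed
  moreover have "P2.clamp \<tau>' - P2.clamp \<tau> \<le> \<tau>' - \<tau>"
    using P2.clamp(3)[of \<tau>' \<tau>] assms by simp
  ultimately show ?thesis by simp
qed

lemma reparam_start: "reparam 0 = 0"
  using arclength_diff_le[of a "P2.param (P2.clamp 0)"] P2_param_clamp[of 0] c_pos P2.arclength_nonneg[of b]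
    P1.le P2.le
  by (simp add: reparam_def P2.clamp(5) mult_le_0_iff)

lemma reparam_total: "reparam (P2.arclength b) = P1.arclength b"
  using arclength_diff_le[of b "P2.param (P2.clamp (P2.arclength b))"] P2_param_clamp[of "P2.arclength b"] c_pos
    P2.arclength_nonneg[of b] P1.le P2.le
  by (simp add: reparam_def P2.clamp(5) mult_le_0_iff)

lemma unit_speed_reparam:
  "\<exists>u\<in>{a..b}. P1.unit_speed (reparam \<tau>) = \<gamma>1 u \<and> P2.unit_speed \<tau> = \<gamma>2 u"
proof (intro bexI conjI)
  let ?u = "P2.param (P2.clamp \<tau>)"
  have "0 \<le> reparam \<tau>" "reparam \<tau> \<le> P1.arclength b"
    using P2_param_clamp P1.arclength_mono P1.arclength_nonneg by (auto simp: reparam_def)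
  then have "P1.param (reparam \<tau>) \<in> {a..b}" "P1.arclength (P1.param (reparam \<tau>)) = P1.arclength ?u"
    and clamp: "P1.clamp (reparam \<tau>) = reparam \<tau>"
    using P1.param[of "reparam \<tau>"] P1.clamp(5) by (auto simp: reparam_def)
  then show "P1.unit_speed (reparam \<tau>) = \<gamma>1 ?u"
    unfolding P1.unit_speed_def clamp using P2_param_clamp by (intro P1.eq_if_arclength_eq) auto
  show "P2.unit_speed \<tau> = \<gamma>2 ?u"
    by (simp add: P2.unit_speed_def)
  show "?u \<in> {a..b}" by (rule P2_param_clamp)
qed

lemma line_integral_le:
  assumes "0 \<le> k"
    and g: "\<And>t. t \<in> {a..b} \<Longrightarrow> ennreal k * g1 (\<gamma>1 t) \<le> g2 (\<gamma>2 t)"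
    and g1: "g1 \<in> borel_measurable (borel_of P1.mtopology)"
  shows "ennreal (k * c) * line_integral \<rho>1 (a, b, \<gamma>1) g1 \<le> line_integral \<rho>2 (a, b, \<gamma>2) g2"
proof -
  have h: "(\<lambda>\<sigma>. g1 (P1.unit_speed \<sigma>)) \<in> borel_measurable borel"
    using measurable_comp[OF measurable_borel_of[OF P1.continuous_map_unit_speed] g1]
    by (simp add: borel_of_euclidean comp_def)
  have "reparam \<in> borel_measurable borel"
    using lipschitz_on_continuous_on[OF lipschitz_on_if_increments_bounded[OF c_pos reparam_increments]]
    by (rule borel_measurable_continuous_onI)
  from measurable_compose[OF this h]
  have h_reparam: "(\<lambda>\<tau>. g1 (P1.unit_speed (reparam \<tau>)) * indicator {0..P2.arclength b} \<tau>)
      \<in> borel_measurable borel"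
    by (intro borel_measurable_times_ennreal borel_measurable_indicator) auto
  have "ennreal (k * c) * line_integral \<rho>1 (a, b, \<gamma>1) g1
      = ennreal k * (ennreal c * (\<integral>\<^sup>+\<sigma>. g1 (P1.unit_speed \<sigma>) * indicator {0..P1.arclength b} \<sigma> \<partial>lborel))"
    using c_pos \<open>0 \<le> k\<close> by (simp add: P1.line_integral_unit_speed ennreal_mult mult.assoc)
  also have "\<dots> \<le> ennreal k * (\<integral>\<^sup>+\<tau>. g1 (P1.unit_speed (reparam \<tau>)) * indicator {0..P2.arclength b} \<tau> \<partial>lborel)"
    using nn_integral_Icc_le_comp[OF c_pos _ reparam_start reparam_total P2.arclength_nonneg h]
      reparam_increments
    by (intro mult_left_mono) auto
  also have "\<dots> = (\<integral>\<^sup>+\<tau>. ennreal k * g1 (P1.unit_speed (reparam \<tau>)) * indicator {0..P2.arclength b} \<tau> \<partial>lborel)"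
    using h_reparam by (simp add: nn_integral_cmult mult.assoc)
  also have "\<dots> \<le> (\<integral>\<^sup>+\<tau>. g2 (P2.unit_speed \<tau>) * indicator {0..P2.arclength b} \<tau> \<partial>lborel)"
  proof (rule nn_integral_mono)
    fix \<tau>
    obtain u where "u \<in> {a..b}" "P1.unit_speed (reparam \<tau>) = \<gamma>1 u" "P2.unit_speed \<tau> = \<gamma>2 u"
      using unit_speed_reparam by blast
    then show "ennreal k * g1 (P1.unit_speed (reparam \<tau>)) * indicator {0..P2.arclength b} \<tau>
        \<le> g2 (P2.unit_speed \<tau>) * indicator {0..P2.arclength b} \<tau>"
      using g[of u] by (simp add: mult_right_mono)
  qed
  also have "\<dots> = line_integral \<rho>2 (a, b, \<gamma>2) g2"
    by (simp add: P2.line_integral_unit_speed)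
  finally show ?thesis .
qed

end

section \<open>The sphericalized metric\<close>

definition chains_between :: "'b \<Rightarrow> 'b \<Rightarrow> 'b list set" where
  "chains_between x y = {xs. 2 \<le> length xs \<and> hd xs = x \<and> last xs = y}"

lemma two_point_chain: "[x, y] \<in> chains_between x y"
  by (simp add: chains_between_def)

lemma sph_dist_chains_between: "sph_dist a x y = (INF xs\<in>chains_between x y. chain_sum (sph_da a) xs)"
  by (simp add: sph_dist_def chains_between_def chain_sum_def)

lemma sph_da_nonneg: "0 \<le> sph_da a u v"
  by (auto simp: sph_da_def split: option.splits)

lemma sph_da_commute: "sph_da a u v = sph_da a v u"
  by (auto simp: sph_da_def dist_commute mult.commute split: option.splits)

lemma sph_da_self [simp]: "sph_da a u u = 0"
  by (auto simp: sph_da_def split: option.splits)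

lemma sph_da_None_diff: "\<bar>sph_da a u None - sph_da a v None\<bar> \<le> sph_da a u v"
proof (cases u; cases v)
  fix x y assume uv: "u = Some x" "v = Some y"
  have px: "0 < 1 + dist x a" and py: "0 < 1 + dist y a"
    by (simp_all add: add_pos_nonneg)
  have "\<bar>1 / (1 + dist x a) - 1 / (1 + dist y a)\<bar> = \<bar>dist y a - dist x a\<bar> / ((1 + dist x a) * (1 + dist y a))"
    using px py by (simp add: field_simps abs_div)
  also have "\<dots> \<le> dist x y / ((1 + dist x a) * (1 + dist y a))"
    using px py dist_triangle[of y a x] dist_triangle[of x a y]
    by (intro divide_right_mono) (auto simp: dist_commute abs_le_iff)
  finally show ?thesis using uv by (simp add: sph_da_def)
qed (auto simp: sph_da_def)

lemma sph_dist_le_chain: "xs \<in> chains_between x y \<Longrightarrow> sph_dist a x y \<le> chain_sum (sph_da a) xs"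
  unfolding sph_dist_chains_between
  by (rule cINF_lower) (auto intro!: bdd_belowI[of _ 0] intro: chain_sum_nonneg[OF sph_da_nonneg])

lemma sph_dist_greatest:
  "(\<And>xs. xs \<in> chains_between x y \<Longrightarrow> m \<le> chain_sum (sph_da a) xs) \<Longrightarrow> m \<le> sph_dist a x y"
  unfolding sph_dist_chains_between by (rule cINF_greatest) (use two_point_chain[of x y] in auto)

lemma sph_dist_le_sph_da: "sph_dist a x y \<le> sph_da a x y"
  using sph_dist_le_chain[OF two_point_chain] by simp

lemma sph_dist_nonneg: "0 \<le> sph_dist a x y"
  by (intro sph_dist_greatest chain_sum_nonneg sph_da_nonneg)

lemma sph_dist_commute: "sph_dist a x y = sph_dist a y x"
proof -
  have le: "sph_dist a x y \<le> sph_dist a y x" for x y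
  proof (rule sph_dist_greatest)
    fix xs assume "xs \<in> chains_between y x"
    then have "rev xs \<in> chains_between x y" by (auto simp: chains_between_def hd_rev last_rev)
    then show "sph_dist a x y \<le> chain_sum (sph_da a) xs"
      using sph_dist_le_chain chain_sum_rev[of "sph_da a" xs] sph_da_commute by metis
  qed
  show ?thesis using le[of x y] le[of y x] by simp
qed

lemma sph_dist_triangle: "sph_dist a x z \<le> sph_dist a x y + sph_dist a y z"
proof -
  have "sph_dist a x z \<le> chain_sum (sph_da a) xs + chain_sum (sph_da a) ys"
    if "xs \<in> chains_between x y" "ys \<in> chains_between y z" for xs ys
  proof -
    have "xs @ tl ys \<in> chains_between x z"
      using that by (cases ys) (auto simp: chains_between_def hd_append)
    moreover have "chain_sum (sph_da a) (xs @ tl ys) = chain_sum (sph_da a) xs + chain_sum (sph_da a) ys"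
      using that by (intro chain_sum_append_tl) (auto simp: chains_between_def)
    ultimately show ?thesis using sph_dist_le_chain by metis
  qed
  then have "sph_dist a x z - chain_sum (sph_da a) ys \<le> sph_dist a x y" if "ys \<in> chains_between y z" for ys
    using that by (intro sph_dist_greatest) (auto simp: algebra_simps)
  then have "sph_dist a x z - sph_dist a x y \<le> sph_dist a y z"
    by (intro sph_dist_greatest) (auto simp: algebra_simps)
  then show ?thesis by simp
qed

lemma chain_sum_ge_sph_da_None_diff:
  "z \<in> set xs \<Longrightarrow> \<bar>sph_da a (hd xs) None - sph_da a z None\<bar> \<le> chain_sum (sph_da a) xs"
proof (induction xs rule: induct_list012)
  case (3 x y zs)
  show ?case
  proof (cases "z = x")
    case True
    then show ?thesis
      using chain_sum_nonneg[of "sph_da a" "x # y # zs", OF sph_da_nonneg] by simp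
  next
    case False
    then have "\<bar>sph_da a y None - sph_da a z None\<bar> \<le> chain_sum (sph_da a) (y # zs)"
      using 3 by simp
    then show ?thesis
      using sph_da_None_diff[of a x y] by simp
  qed
qed auto

lemma chain_sum_ge_in_ball:
  assumes "0 \<le> r"
  shows "\<forall>z\<in>set xs. \<exists>w. z = Some w \<and> dist w a \<le> r \<Longrightarrow> xs \<noteq> [] \<Longrightarrow>
    dist (the (hd xs)) (the (last xs)) / (1 + r)\<^sup>2 \<le> chain_sum (sph_da a) xs"
proof (induction xs rule: induct_list012)
  case (3 x y zs)
  obtain x' y' where xy: "x = Some x'" "y = Some y'" "dist x' a \<le> r" "dist y' a \<le> r"
    using "3.prems" by auto
  have IH: "dist y' (the (last (y # zs))) / (1 + r)\<^sup>2 \<le> chain_sum (sph_da a) (y # zs)"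
    using "3.IH"(2) "3.prems" xy by simp
  have "(1 + dist x' a) * (1 + dist y' a) \<le> (1 + r)\<^sup>2"
    using xy assms by (simp add: power2_eq_square mult_mono)
  then have "dist x' y' / (1 + r)\<^sup>2 \<le> dist x' y' / ((1 + dist x' a) * (1 + dist y' a))"
    by (rule divide_left_mono) (use assms in \<open>auto intro!: mult_pos_pos add_pos_nonneg\<close>)
  then have "dist x' y' / (1 + r)\<^sup>2 \<le> sph_da a x y"
    using xy by (simp add: sph_da_def)
  let ?z = "the (last (y # zs))"
  have "dist x' ?z / (1 + r)\<^sup>2 \<le> (dist x' y' + dist y' ?z) / (1 + r)\<^sup>2"
    by (rule divide_right_mono) (simp_all add: dist_triangle)
  also have "\<dots> \<le> sph_da a x y + chain_sum (sph_da a) (y # zs)"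
    unfolding add_divide_distrib by (intro add_mono IH \<open>dist x' y' / (1 + r)\<^sup>2 \<le> sph_da a x y\<close>)
  finally show ?case
    using xy by simp
qed auto

text \<open>A chain from \<open>x\<close> to \<open>y\<close> either stays in a ball around \<open>a\<close> of comparable radius, where
  \<open>sph_da\<close> is comparable with \<open>dist\<close>, or it gets close to \<open>\<infinity>\<close>, which costs at least a fixed
  amount.\<close>
lemma sph_dist_lower_bound:
  assumes r: "0 \<le> r" "dist x a \<le> r"
  shows "min (dist x y / (2 * r + 2)\<^sup>2) (1 / (2 * r + 2)) \<le> sph_dist a (Some x) (Some y)"
proof (rule sph_dist_greatest)
  fix xs assume xs: "xs \<in> chains_between (Some x) (Some y)"
  then have ne: "xs \<noteq> []" and hd: "hd xs = Some x" and last: "last xs = Some y"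
    by (auto simp: chains_between_def)
  show "min (dist x y / (2 * r + 2)\<^sup>2) (1 / (2 * r + 2)) \<le> chain_sum (sph_da a) xs"
  proof (cases "\<forall>z\<in>set xs. \<exists>w. z = Some w \<and> dist w a \<le> 2 * r + 1")
    case True
    then have "dist x y / (1 + (2 * r + 1))\<^sup>2 \<le> chain_sum (sph_da a) xs"
      using chain_sum_ge_in_ball[of "2 * r + 1" xs a] r ne hd last by simp
    then show ?thesis by (simp add: add.commute)
  next
    case False
    then obtain z where z: "z \<in> set xs" "z = None \<or> (\<exists>w. z = Some w \<and> 2 * r + 1 < dist w a)"
      by (metis not_le option.exhaust)
    have "sph_da a z None \<le> 1 / (2 * r + 2)"
      using z r by (cases z) (auto simp: sph_da_def frac_le)
    moreover have "1 / (r + 1) \<le> sph_da a (Some x) None"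
      using r by (simp add: sph_da_def add.commute divide_left_mono add_pos_nonneg)
    moreover have "1 / (r + 1) - 1 / (2 * r + 2) = 1 / (2 * r + 2)"
      using r by (simp add: field_simps)
    ultimately show ?thesis
      using chain_sum_ge_sph_da_None_diff[OF z(1), of a] hd by (simp add: min.coboundedI2)
  qed
qed

lemma sph_dist_Some_None_ge: "1 / (1 + dist x a) \<le> sph_dist a (Some x) None"
proof (rule sph_dist_greatest)
  fix xs assume xs: "xs \<in> chains_between (Some x) None"
  then have "None \<in> set xs" "hd xs = Some x"
    by (auto simp: chains_between_def) (metis last_in_set list.size(3) not_numeral_le_zero)
  then show "1 / (1 + dist x a) \<le> chain_sum (sph_da a) xs"
    using chain_sum_ge_sph_da_None_diff[of None xs a] by (simp add: sph_da_def)
qed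

lemma sph_dist_le_dist: "sph_dist a (Some x) (Some y) \<le> dist x y"
proof -
  have "1 \<le> (1 + dist x a) * (1 + dist y a)"
    using mult_mono[of 1 "1 + dist x a" 1 "1 + dist y a"] by simp
  then have "sph_da a (Some x) (Some y) \<le> dist x y"
    by (simp add: sph_da_def divide_le_eq mult_le_cancel_left1 mult.commute)
  then show ?thesis using sph_dist_le_sph_da[of a "Some x" "Some y"] by simp
qed

lemma Metric_space_sph_dist: "Metric_space UNIV (sph_dist a)"
proof
  fix x y z :: "'a option"
  show "0 \<le> sph_dist a x y" by (rule sph_dist_nonneg)
  show "sph_dist a x y = sph_dist a y x" by (rule sph_dist_commute)
  show "sph_dist a x z \<le> sph_dist a x y + sph_dist a y z" by (rule sph_dist_triangle)
  show "sph_dist a x y = 0 \<longleftrightarrow> x = y"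
  proof
    assume 0: "sph_dist a x y = 0"
    show "x = y"
    proof (cases x; cases y)
      fix x' y' assume xy: "x = Some x'" "y = Some y'"
      have pos: "0 < 2 * dist x' a + 2" using zero_le_dist[of x' a] by linarith
      have "min (dist x' y' / (2 * dist x' a + 2)\<^sup>2) (1 / (2 * dist x' a + 2)) \<le> 0"
        using sph_dist_lower_bound[of "dist x' a" x' a y'] 0 xy by simp
      then have "dist x' y' \<le> 0"
        using pos by (simp add: min_le_iff_disj divide_le_0_iff)
      then show "x = y" using xy by simp
    next
      fix x' assume "x = Some x'" "y = None"
      then show "x = y" using sph_dist_Some_None_ge[of x' a] 0 zero_le_dist[of x' a] by (simp add: field_simps)
    next
      fix y' assume "x = None" "y = Some y'"
      then show "x = y" using sph_dist_Some_None_ge[of y' a] 0 sph_dist_commute[of a x y] zero_le_dist[of y' a]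
        by (simp add: field_simps)
    qed simp
  qed (use sph_dist_le_sph_da[of a y y] sph_dist_nonneg[of a y y] in simp)
qed

section \<open>Topology and measure of the sphericalization\<close>

lemma borel_measurable_dist_weight:
  "(\<lambda>x. ennreal ((1 + dist x a) powr e)) \<in> borel_measurable borel"
  by (intro measurable_compose[OF _ measurable_ennreal] borel_measurable_continuous_onI continuous_intros)
    (auto simp: add_nonneg_eq_0_iff)

context
  fixes a :: "'a::metric_space"
begin

interpretation S: Metric_space UNIV "sph_dist a"
  by (rule Metric_space_sph_dist)

lemma continuous_map_Some: "continuous_map euclidean S.mtopology Some"
  unfolding S.continuous_map_to_metric
proof (intro ballI allI impI)
  fix x :: 'a and \<epsilon> :: real assume "0 < \<epsilon>"
  have "Some y \<in> S.mball (Some x) \<epsilon>" if "y \<in> ball x \<epsilon>" for y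
    using that sph_dist_le_dist[of a x y] by simp
  then show "\<exists>U. openin euclidean U \<and> x \<in> U \<and> (\<forall>y\<in>U. Some y \<in> S.mball (Some x) \<epsilon>)"
    using \<open>0 < \<epsilon>\<close> by (intro exI[of _ "ball x \<epsilon>"]) auto
qed

lemma openin_Some_image: "open U \<Longrightarrow> openin S.mtopology (Some ` U)"
  unfolding S.openin_mtopology
proof (intro conjI ballI allI impI)
  fix z assume "open U" and "z \<in> Some ` U"
  then obtain x where x: "z = Some x" "x \<in> U"
    by blast
  then obtain \<delta> where "0 < \<delta>" "ball x \<delta> \<subseteq> U"
    using \<open>open U\<close> open_contains_ball by blast
  define r where "r = dist x a"
  define \<epsilon> where "\<epsilon> = min (\<delta> / (2 * r + 2)\<^sup>2) (1 / (2 * r + 2))"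
  have r: "0 \<le> r" "0 < 2 * r + 2"
    unfolding r_def using zero_le_dist[of x a] by linarith+
  have inside: "w \<in> Some ` U" if w: "sph_dist a (Some x) w < \<epsilon>" for w
  proof (cases w)
    case None
    have "1 / (2 * r + 2) \<le> 1 / (1 + r)"
      using r by (intro divide_left_mono) auto
    moreover have "1 / (1 + r) \<le> sph_dist a (Some x) w"
      using None sph_dist_Some_None_ge[of x a] by (simp add: r_def)
    moreover have "\<epsilon> \<le> 1 / (2 * r + 2)"
      by (simp add: \<epsilon>_def)
    ultimately show ?thesis
      using w by linarith
  next
    case (Some y)
    have "min (dist x y / (2 * r + 2)\<^sup>2) (1 / (2 * r + 2)) \<le> sph_dist a (Some x) w"
      using sph_dist_lower_bound[of r x a y] r Some by (simp add: r_def)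
    then have "dist x y / (2 * r + 2)\<^sup>2 < \<delta> / (2 * r + 2)\<^sup>2"
      using w unfolding \<epsilon>_def by linarith
    then have "dist x y < \<delta>"
      using r by (simp add: divide_less_cancel)
    then show ?thesis
      using Some \<open>ball x \<delta> \<subseteq> U\<close> by (auto simp: dist_commute)
  qed
  have "0 < \<epsilon>"
    using r \<open>0 < \<delta>\<close> by (simp add: \<epsilon>_def)
  moreover have "S.mball z \<epsilon> \<subseteq> Some ` U"
    using inside x by auto
  ultimately show "\<exists>r>0. S.mball z r \<subseteq> Some ` U"
    by blast
qed simp

lemma sets_borel_of_sph: "sets (borel_of S.mtopology) = sigma_sets UNIV {U. openin S.mtopology U}"
  unfolding borel_of_def by (simp add: sets_measure_of_conv openin_subset subset_eq)

lemma space_borel_of_sph: "space (borel_of S.mtopology) = UNIV"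
  unfolding borel_of_def by (simp add: space_measure_of_conv)

lemma None_in_sets: "{None} \<in> sets (borel_of S.mtopology)"
proof -
  have "UNIV - Some ` UNIV \<in> sigma_sets UNIV {U. openin S.mtopology U}"
    using openin_Some_image[of UNIV] by (auto intro: sigma_sets.Compl)
  moreover have "UNIV - Some ` UNIV = {None :: 'a option}"
    by (auto simp: notin_range_Some)
  ultimately show ?thesis by (simp add: sets_borel_of_sph)
qed

lemma measurable_the: "the \<in> borel_measurable (borel_of S.mtopology)"
proof (rule borel_measurableI)
  fix U :: "'a set" assume "open U"
  have "the -` U = Some ` U \<union> (if the None \<in> U then {None} else {})"
  proof (rule set_eqI)
    fix u :: "'a option"
    show "u \<in> the -` U \<longleftrightarrow> u \<in> Some ` U \<union> (if the None \<in> U then {None} else {})"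
      by (cases u) auto
  qed
  moreover have "Some ` U \<in> sets (borel_of S.mtopology)"
    using openin_Some_image[OF \<open>open U\<close>] by (simp add: sets_borel_of_sph)
  moreover have "{None} \<union> Some ` U \<in> sets (borel_of S.mtopology)"
    using None_in_sets \<open>Some ` U \<in> sets (borel_of S.mtopology)\<close> by (rule sets.Un)
  ultimately show "the -` U \<inter> space (borel_of S.mtopology) \<in> sets (borel_of S.mtopology)"
    by (simp add: space_borel_of_sph)
qed

lemma measurable_case_option:
  assumes "G \<in> borel_measurable borel"
  shows "(\<lambda>u. case u of None \<Rightarrow> c | Some x \<Rightarrow> G x) \<in> borel_measurable (borel_of S.mtopology)"
proof -
  have "(\<lambda>u. if u \<in> {None} then c else G (the u)) \<in> borel_measurable (borel_of S.mtopology)"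
    using None_in_sets
    by (intro measurable_If_set measurable_compose[OF measurable_the assms])
      (simp_all add: space_borel_of_sph)
  moreover have "(\<lambda>u. if u \<in> {None} then c else G (the u)) = (\<lambda>u. case u of None \<Rightarrow> c | Some x \<Rightarrow> G x)"
    by (auto split: option.splits)
  ultimately show ?thesis by simp
qed

lemma measurable_sph_sigma:
  fixes \<mu> :: "'a measure"
  assumes "sets borel \<subseteq> sets \<mu>" and F: "F \<in> borel_measurable (borel_of S.mtopology)"
  shows "F \<in> borel_measurable (sigma UNIV {A. Some -` A \<in> sets \<mu>})"
proof -
  have "id \<in> measurable (sigma UNIV {A. Some -` A \<in> sets \<mu>}) (borel_of S.mtopology)"
    unfolding borel_of_def
  proof (rule measurable_measure_of)
    show "{U. openin S.mtopology U} \<subseteq> Pow (topspace S.mtopology)"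
      by (auto dest: openin_subset)
    fix U assume "U \<in> {U. openin S.mtopology U}"
    then have "open (Some -` U)"
      using continuous_map_Some by (simp add: continuous_map_def vimage_def)
    then have "Some -` U \<in> sets \<mu>"
      using assms(1) by auto
    then show "id -` U \<inter> space (sigma UNIV {A. Some -` A \<in> sets \<mu>}) \<in> sets (sigma UNIV {A. Some -` A \<in> sets \<mu>})"
      by (auto intro: sigma_sets.Basic)
  qed simp
  from measurable_comp[OF this F] show ?thesis
    by (simp add: comp_def)
qed

lemma nn_integral_sph_measure:
  fixes \<mu> :: "'a measure"
  assumes "space \<mu> = UNIV" "sets borel \<subseteq> sets \<mu>" and F: "F \<in> borel_measurable (borel_of S.mtopology)"
  shows "(\<integral>\<^sup>+u. F u \<partial>sph_measure \<mu> a q) = (\<integral>\<^sup>+x. ennreal (1 / (1 + dist x a) powr q) * F (Some x) \<partial>\<mu>)"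
proof -
  let ?M = "sigma UNIV {A. Some -` A \<in> sets \<mu>}"
  let ?w = "\<lambda>u. case u of None \<Rightarrow> 0 | Some x \<Rightarrow> ennreal (1 / (1 + dist x a) powr q)"
  have weight: "(\<lambda>x. ennreal (1 / (1 + dist x a) powr q)) \<in> borel_measurable borel"
    using borel_measurable_dist_weight[of a "- q"] by (simp add: powr_minus_divide)
  have w: "?w \<in> borel_measurable (distr \<mu> ?M Some)"
    using measurable_sph_sigma[OF assms(2) measurable_case_option[OF weight]] by simp
  have F': "F \<in> borel_measurable (distr \<mu> ?M Some)"
    using measurable_sph_sigma[OF assms(2) F] by simp
  have Some: "Some \<in> measurable \<mu> ?M"
    using assms(1) by (intro measurable_measure_of) auto
  have "(\<integral>\<^sup>+u. F u \<partial>sph_measure \<mu> a q) = (\<integral>\<^sup>+u. ?w u * F u \<partial>distr \<mu> ?M Some)"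
    unfolding sph_measure_def by (rule nn_integral_density[OF w F'])
  also have "\<dots> = (\<integral>\<^sup>+x. ?w (Some x) * F (Some x) \<partial>\<mu>)"
    using w F' by (intro nn_integral_distr[OF Some]) auto
  finally show ?thesis by simp
qed

end

section \<open>Curves under sphericalization\<close>

lemma ennpow_mult_ennreal:
  assumes "0 < K"
  shows "ennpow (g * ennreal K) p = ennpow g p * ennreal (K powr p)"
proof (cases g rule: ennreal_cases)
  case (real r)
  then have "ennpow (g * ennreal K) p = ennreal ((r * K) powr p)"
    using assms real by (simp add: ennpow_def ennreal_mult[symmetric])
  also have "\<dots> = ennreal (r powr p) * ennreal (K powr p)"
    using real assms by (simp add: powr_mult ennreal_mult)
  finally show ?thesis
    using real by (simp add: ennpow_def)
next
  case top
  then show ?thesis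
    using assms by (simp add: ennpow_def ennreal_mult_top)
qed

lemma measurable_ennpow [measurable]:
  assumes [measurable]: "f \<in> borel_measurable M"
  shows "(\<lambda>x. ennpow (f x) p) \<in> borel_measurable M"
  unfolding ennpow_def by measurable

lemma ennpow_mult_dist_weight:
  "ennpow (G * ennreal ((1 + dist x a) powr e)) p = ennpow G p * ennreal ((1 + dist x a) powr (e * p))"
  using ennpow_mult_ennreal[of "(1 + dist x a) powr e" G p] zero_le_dist[of x a]
  by (simp add: powr_powr add_pos_nonneg)

lemma rectifiable_path_dist:
  assumes "rectifiable_curve UNIV dist (t0, t1, \<gamma>)"
  shows "rectifiable_path dist \<gamma> t0 t1"
  using Met_TC.Metric_space_axioms assms
  by (simp add: rectifiable_path_def rectifiable_path_axioms_def rectifiable_curve_def compact_curve_def)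

lemma rectifiable_path_sph:
  assumes "rectifiable_curve UNIV dist (t0, t1, \<gamma>)"
  shows "rectifiable_path (sph_dist a) (Some \<circ> \<gamma>) t0 t1"
proof -
  interpret P: rectifiable_path dist \<gamma> t0 t1
    by (rule rectifiable_path_dist[OF assms])
  have "ennreal 1 * curve_length (sph_dist a) (Some \<circ> \<gamma>) t0 t1 \<le> curve_length dist \<gamma> t0 t1"
    by (rule curve_length_scaled_mono) (simp_all add: sph_dist_le_dist)
  then have "curve_length (sph_dist a) (Some \<circ> \<gamma>) t0 t1 < \<infinity>"
    using P.finite_length by simp
  moreover have "continuous_map (top_of_set {t0..t1}) (Metric_space.mtopology UNIV (sph_dist a)) (Some \<circ> \<gamma>)"
    using continuous_map_compose[OF P.continuous[unfolded mtopology_is_euclidean] continuous_map_Some]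
    by simp
  ultimately show ?thesis
    using Metric_space_sph_dist[of a] P.le
    by (simp add: rectifiable_path_def rectifiable_path_axioms_def)
qed

lemma rectifiable_curve_bounded:
  assumes "rectifiable_curve UNIV dist (t0, t1, \<gamma>)"
  obtains R where "0 \<le> R" "\<And>t. t \<in> {t0..t1} \<Longrightarrow> dist (\<gamma> t) a \<le> R"
proof -
  have "continuous_on {t0..t1} \<gamma>"
    using assms by (simp add: rectifiable_curve_def compact_curve_def)
  then have "bounded (\<gamma> ` {t0..t1})"
    by (intro compact_imp_bounded compact_continuous_image) auto
  then obtain R where "\<And>t. t \<in> {t0..t1} \<Longrightarrow> dist a (\<gamma> t) \<le> R"
    unfolding bounded_any_center[of _ a] by blast
  then show ?thesis
    using that[of "max R 0"] by (fastforce simp: dist_commute)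
qed

lemma sph_dist_ge_in_ball:
  assumes "dist x a \<le> R" "dist y a \<le> R"
  shows "dist x y / (2 * R + 2)\<^sup>2 \<le> sph_dist a (Some x) (Some y)"
proof -
  have R: "0 \<le> R" using assms(1) zero_le_dist[of x a] by linarith
  have "dist x y \<le> 2 * R + 2"
    using dist_triangle[of x y a] assms by (simp add: dist_commute)
  then have "dist x y / (2 * R + 2)\<^sup>2 \<le> (2 * R + 2) / (2 * R + 2)\<^sup>2"
    using R by (intro divide_right_mono) auto
  also have "\<dots> = 1 / (2 * R + 2)"
    using R by (simp add: power2_eq_square)
  finally have "dist x y / (2 * R + 2)\<^sup>2 \<le> 1 / (2 * R + 2)" .
  then show ?thesis
    using sph_dist_lower_bound[OF R assms(1), of y] by (simp add: min_def split: if_splits)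
qed

lemma line_integral_sph_infinite:
  assumes \<gamma>: "rectifiable_curve UNIV dist (t0, t1, \<gamma>)" and g: "g \<in> borel_measurable borel" and "0 \<le> e"
    and "line_integral dist (t0, t1, \<gamma>) g = \<infinity>"
  shows "line_integral (sph_dist a) (t0, t1, Some \<circ> \<gamma>)
    (\<lambda>u. case u of None \<Rightarrow> 0 | Some x \<Rightarrow> g x * ennreal ((1 + dist x a) powr e)) = \<infinity>"
proof -
  obtain R where R: "0 \<le> R" "\<And>t. t \<in> {t0..t1} \<Longrightarrow> dist (\<gamma> t) a \<le> R"
    using rectifiable_curve_bounded[OF \<gamma>] by blast
  interpret path_pair dist \<gamma> "sph_dist a" "Some \<circ> \<gamma>" t0 t1 "1 / (2 * R + 2)\<^sup>2"
  proof (rule path_pair.intro[OF rectifiable_path_dist[OF \<gamma>] rectifiable_path_sph[OF \<gamma>]], unfold_locales)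
    show "0 < 1 / (2 * R + 2)\<^sup>2" using R by simp
    fix s t assume "s \<in> {t0..t1}" "t \<in> {t0..t1}"
    then show "1 / (2 * R + 2)\<^sup>2 * dist (\<gamma> s) (\<gamma> t) \<le> sph_dist a ((Some \<circ> \<gamma>) s) ((Some \<circ> \<gamma>) t)"
      using sph_dist_ge_in_ball[OF R(2) R(2)] by simp
  qed
  have "1 \<le> (1 + dist x a) powr e" for x
    using \<open>0 \<le> e\<close> by (intro ge_one_powr_ge_zero) auto
  then have "ennreal 1 * g x \<le> g x * ennreal ((1 + dist x a) powr e)" for x
    using mult_left_mono[of 1 "ennreal ((1 + dist x a) powr e)" "g x"] by (simp add: ennreal_leI)
  then have "ennreal (1 * (1 / (2 * R + 2)\<^sup>2)) * line_integral dist (t0, t1, \<gamma>) g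
      \<le> line_integral (sph_dist a) (t0, t1, Some \<circ> \<gamma>)
          (\<lambda>u. case u of None \<Rightarrow> 0 | Some x \<Rightarrow> g x * ennreal ((1 + dist x a) powr e))"
    using g by (intro line_integral_le) (simp_all add: borel_of_euclidean)
  then show ?thesis
    using assms(4) R by (simp add: ennreal_mult_top top_unique)
qed

lemma line_integral_infinite_of_sph:
  assumes \<gamma>: "rectifiable_curve UNIV dist (t0, t1, \<gamma>)" and "0 \<le> e"
    and g: "g \<in> borel_measurable (borel_of (Metric_space.mtopology UNIV (sph_dist a)))"
    and "line_integral (sph_dist a) (t0, t1, Some \<circ> \<gamma>) g = \<infinity>"
  shows "line_integral dist (t0, t1, \<gamma>) (\<lambda>x. g (Some x) * ennreal ((1 + dist x a) powr - e)) = \<infinity>"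
proof -
  obtain R where R: "0 \<le> R" "\<And>t. t \<in> {t0..t1} \<Longrightarrow> dist (\<gamma> t) a \<le> R"
    using rectifiable_curve_bounded[OF \<gamma>] by blast
  interpret path_pair "sph_dist a" "Some \<circ> \<gamma>" dist \<gamma> t0 t1 1
    by (rule path_pair.intro[OF rectifiable_path_sph[OF \<gamma>] rectifiable_path_dist[OF \<gamma>]], unfold_locales)
      (simp_all add: sph_dist_le_dist)
  have "ennreal ((1 + R) powr - e) * g (Some (\<gamma> t)) \<le> g (Some (\<gamma> t)) * ennreal ((1 + dist (\<gamma> t) a) powr - e)"
    if "t \<in> {t0..t1}" for t
    using R(2)[OF that] \<open>0 \<le> e\<close>
    by (subst mult.commute, intro mult_left_mono ennreal_leI powr_mono2') (auto simp: add_pos_nonneg)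
  then have "ennreal ((1 + R) powr - e * 1) * line_integral (sph_dist a) (t0, t1, Some \<circ> \<gamma>) g
      \<le> line_integral dist (t0, t1, \<gamma>) (\<lambda>x. g (Some x) * ennreal ((1 + dist x a) powr - e))"
    using g by (intro line_integral_le) auto
  then show ?thesis
    using assms(4) R by (simp add: ennreal_mult_top top_unique)
qed

lemma ennreal_inverse_weight_cancel:
  fixes x a :: "'a::metric_space"
  shows "ennreal (1 / (1 + dist x a) powr q) * (X * ennreal ((1 + dist x a) powr q)) = X"
proof -
  have "0 < 1 + dist x a" using zero_le_dist[of x a] by linarith
  then have "ennreal (1 / (1 + dist x a) powr q) * ennreal ((1 + dist x a) powr q) = 1"
    by (simp flip: ennreal_mult)
  then show ?thesis
    by (metis mult.commute mult.left_commute mult.right_neutral)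
qed

lemma zero_p_modulus_sphericalization:
  fixes \<mu> :: "'a::metric_space measure"
  assumes "0 < p" "0 \<le> q" "space \<mu> = UNIV" "sets borel \<subseteq> sets \<mu>"
    and \<Gamma>: "\<forall>c\<in>\<Gamma>. rectifiable_curve UNIV dist c"
    and "zero_p_modulus UNIV dist \<mu> p \<Gamma>"
  shows "zero_p_modulus UNIV (sph_dist a) (sph_measure \<mu> a q) p ((\<lambda>(t0, t1, \<gamma>). (t0, t1, Some \<circ> \<gamma>)) ` \<Gamma>)"
proof -
  obtain g where g: "g \<in> borel_measurable borel" and g_int: "(\<integral>\<^sup>+x. ennpow (g x) p \<partial>\<mu>) < \<infinity>"
    and g_curves: "\<forall>c\<in>\<Gamma>. line_integral dist c g = \<infinity>"
    using assms(6) by (auto simp: zero_p_modulus_def borel_of_euclidean)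
  define h where "h u = (case u of None \<Rightarrow> 0 | Some x \<Rightarrow> g x * ennreal ((1 + dist x a) powr (q / p)))" for u
  have h: "h \<in> borel_measurable (borel_of (Metric_space.mtopology UNIV (sph_dist a)))"
    unfolding h_def using g borel_measurable_dist_weight
    by (intro measurable_case_option borel_measurable_times_ennreal)
  have "(\<integral>\<^sup>+u. ennpow (h u) p \<partial>sph_measure \<mu> a q)
      = (\<integral>\<^sup>+x. ennreal (1 / (1 + dist x a) powr q) * ennpow (h (Some x)) p \<partial>\<mu>)"
    by (rule nn_integral_sph_measure[OF assms(3,4) measurable_ennpow[OF h]])
  also have "\<dots> = (\<integral>\<^sup>+x. ennpow (g x) p \<partial>\<mu>)"
    using \<open>0 < p\<close> by (simp add: h_def ennpow_mult_dist_weight ennreal_inverse_weight_cancel)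
  finally have "(\<integral>\<^sup>+u. ennpow (h u) p \<partial>sph_measure \<mu> a q) < \<infinity>"
    using g_int by simp
  moreover have "line_integral (sph_dist a) c h = \<infinity>"
    if "c \<in> (\<lambda>(t0, t1, \<gamma>). (t0, t1, Some \<circ> \<gamma>)) ` \<Gamma>" for c
  proof -
    from that obtain c0 where "c0 \<in> \<Gamma>" "c = (\<lambda>(t0, t1, \<gamma>). (t0, t1, Some \<circ> \<gamma>)) c0"
      by blast
    moreover obtain t0 t1 \<gamma> where "c0 = (t0, t1, \<gamma>)"
      by (cases c0) auto
    ultimately have "(t0, t1, \<gamma>) \<in> \<Gamma>" "c = (t0, t1, Some \<circ> \<gamma>)"
      by simp_all
    then show ?thesis
      using line_integral_sph_infinite[of t0 t1 \<gamma> g "q / p" a] \<Gamma> g g_curves assms(1,2)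
      by (simp add: h_def[abs_def])
  qed
  ultimately show ?thesis
    unfolding zero_p_modulus_def using h by blast
qed

lemma zero_p_modulus_of_sphericalization:
  fixes \<mu> :: "'a::metric_space measure"
  assumes "0 < p" "0 \<le> q" "space \<mu> = UNIV" "sets borel \<subseteq> sets \<mu>"
    and \<Gamma>: "\<forall>c\<in>\<Gamma>. rectifiable_curve UNIV dist c"
    and "zero_p_modulus UNIV (sph_dist a) (sph_measure \<mu> a q) p ((\<lambda>(t0, t1, \<gamma>). (t0, t1, Some \<circ> \<gamma>)) ` \<Gamma>)"
  shows "zero_p_modulus UNIV dist \<mu> p \<Gamma>"
proof -
  obtain h where h: "h \<in> borel_measurable (borel_of (Metric_space.mtopology UNIV (sph_dist a)))"
    and h_int: "(\<integral>\<^sup>+u. ennpow (h u) p \<partial>sph_measure \<mu> a q) < \<infinity>"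
    and h_curves: "\<forall>c\<in>(\<lambda>(t0, t1, \<gamma>). (t0, t1, Some \<circ> \<gamma>)) ` \<Gamma>. line_integral (sph_dist a) c h = \<infinity>"
    using assms(6) by (auto simp: zero_p_modulus_def)
  define g where "g x = h (Some x) * ennreal ((1 + dist x a) powr - (q / p))" for x
  have "(\<lambda>x. h (Some x)) \<in> borel_measurable borel"
    using measurable_compose[OF measurable_borel_of[OF continuous_map_Some] h]
    by (simp add: borel_of_euclidean)
  then have g: "g \<in> borel_measurable borel"
    unfolding g_def using borel_measurable_dist_weight by (rule borel_measurable_times_ennreal)
  have "ennpow (g x) p = ennreal (1 / (1 + dist x a) powr q) * ennpow (h (Some x)) p" for x
  proof -
    have "ennpow (g x) p = ennpow (h (Some x)) p * ennreal ((1 + dist x a) powr (- (q / p) * p))"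
      unfolding g_def by (rule ennpow_mult_dist_weight)
    then show ?thesis
      using \<open>0 < p\<close> by (simp add: powr_minus_divide mult.commute)
  qed
  then have "(\<integral>\<^sup>+x. ennpow (g x) p \<partial>\<mu>) = (\<integral>\<^sup>+x. ennreal (1 / (1 + dist x a) powr q) * ennpow (h (Some x)) p \<partial>\<mu>)"
    by simp
  also have "\<dots> = (\<integral>\<^sup>+u. ennpow (h u) p \<partial>sph_measure \<mu> a q)"
    by (rule nn_integral_sph_measure[OF assms(3,4) measurable_ennpow[OF h], symmetric])
  finally have "(\<integral>\<^sup>+x. ennpow (g x) p \<partial>\<mu>) < \<infinity>"
    using h_int by simp
  moreover have "line_integral dist c g = \<infinity>" if "c \<in> \<Gamma>" for c
  proof -
    obtain t0 t1 \<gamma> where c: "c = (t0, t1, \<gamma>)"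
      by (cases c) auto
    then have "line_integral (sph_dist a) (t0, t1, Some \<circ> \<gamma>) h = \<infinity>"
      using h_curves that by force
    then show ?thesis
      using line_integral_infinite_of_sph[of t0 t1 \<gamma> "q / p" h a] \<Gamma> h that c assms(1,2)
      by (simp add: g_def[abs_def])
  qed
  ultimately show ?thesis
    unfolding zero_p_modulus_def borel_of_euclidean mtopology_is_euclidean using g by blast
qed

theorem lemma6p1:
  fixes \<mu> :: "'a::complete_space measure" and p q s Cs :: real and a :: 'a
    and \<Gamma> :: "'a curve set"
  assumes "1 \<le> p"
    and "\<not> bounded (UNIV :: 'a set)"
    and "space \<mu> = UNIV" and "sets borel \<subseteq> sets \<mu>" and "complete_measure_cond \<mu>"
    and "\<forall>x r. r > 0 \<longrightarrow> 0 < emeasure \<mu> (ball x r) \<and> emeasure \<mu> (ball x r) < \<infinity>"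
    and "doubling \<mu>" and "p_poincare \<mu> p"
    and "s > 0" and "Cs > 0"
    and "\<forall>r R. 1 \<le> r \<and> r \<le> R \<longrightarrow> Cs * (r / R) powr s \<le> measure \<mu> (ball a r) / measure \<mu> (ball a R)"
    and "annularly_connected a"
    and "q > s"
    and "\<forall>c\<in>\<Gamma>. rectifiable_curve UNIV dist c"
  shows "zero_p_modulus UNIV dist \<mu> p \<Gamma> \<longleftrightarrow>
         zero_p_modulus UNIV (sph_dist a) (sph_measure \<mu> a q) p
           ((\<lambda>(t0, t1, \<gamma>). (t0, t1, Some \<circ> \<gamma>)) ` \<Gamma>)"
proof -
  \<comment> \<open>The argument works curve by curve inside a ball.\<close>
  have "0 < p" "0 \<le> q"
    using assms(1,9,13) by linarith+
  then show ?thesis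
    using zero_p_modulus_sphericalization[of p q \<mu> \<Gamma> a] zero_p_modulus_of_sphericalization[of p q \<mu> \<Gamma> a]
      assms(3,4,14) by blast
qed

end
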